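(* Let $(X,\mathcal{F},\mu)$ be a finite positive measure space and let $\{\psi_{j,k}(x): j,k=1,2,\dots\}$ be an orthonormal system of real-valued functions in $L^2(X,\mathcal{F},\mu)$. Let $\{c_{j,k}: j,k=1,2,\dots\}$ be real numbers such that $$\sum_{j=1}^{\infty}\sum_{k=1}^{\infty}c_{j,k}^2\,[\log\log(j+3)]^2\,[\log\log(k+3)]^2<\infty .$$ Let $s_{m,n}(x)=\sum_{j=1}^{m}\sum_{k=1}^{n}c_{j,k}\psi_{j,k}(x)$ for $m,n=1,2,\dots$, and let $g\in L^2(X,\mathcal{F},\mu)$ be the $L^2$-sum of the series $\sum_{j,k}c_{j,k}\psi_{j,k}$, i.e. $\lim_{m,n\to\infty}\int_X|s_{m,n}(x)-g(x)|^2\,d\mu(x)=0$. Then the series is strongly Cesàro $|C,1,1|$ summable almost everywhere to $g$, that is, $$\frac{1}{MN}\sum_{m=1}^{M}\sum_{n=1}^{N}|s_{m,n}(x)-g(x)|^2\to 0\quad\text{for }\mu\text{-almost every }x\in X,\ \text{as }M,N\to\infty.$$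
   Context: Here $M,N\to\infty$ means that both $M$ and $N$ tend to infinity (convergence in Pringsheim's sense, i.e. as $\min(M,N)\to\infty$). Logarithms are to base 2. The orthonormal system is what the paper calls a wavelet system; only orthonormality is used. *)

theory Defs
  imports "HOL-Analysis.Analysis"
begin

definition rect_partial_sum ::
  "(nat \<Rightarrow> nat \<Rightarrow> real) \<Rightarrow> (nat \<Rightarrow> nat \<Rightarrow> 'a \<Rightarrow> real) \<Rightarrow> nat \<Rightarrow> nat \<Rightarrow> 'a \<Rightarrow> real" where
  "rect_partial_sum c \<psi> m n x = (\<Sum>j=1..m. \<Sum>k=1..n. c j k * \<psi> j k x)"

definition orthonormal_system2 :: "'a measure \<Rightarrow> (nat \<Rightarrow> nat \<Rightarrow> 'a \<Rightarrow> real) \<Rightarrow> bool" where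
  "orthonormal_system2 M \<psi> \<longleftrightarrow>
     (\<forall>j\<ge>1. \<forall>k\<ge>1. \<psi> j k \<in> borel_measurable M \<and> integrable M (\<lambda>x. (\<psi> j k x)\<^sup>2)) \<and>
     (\<forall>j\<ge>1. \<forall>k\<ge>1. \<forall>j'\<ge>1. \<forall>k'\<ge>1.
        (\<integral>x. \<psi> j k x * \<psi> j' k' x \<partial>M) = (if j = j' \<and> k = k' then 1 else 0))"

end

theory Submission
  imports Defs
begin

(* The indices are grouped into the blocks (2^2^i, 2^2^(i+1)], on which log log j is about i.
   Each block is cut into 2^i dyadic cells, and the Rademacher-Menshov dyadic decomposition yields
   square-integrable majorants, for the block pair (i,l), of all quantities entering the Cesaro means:
   tails inside a block along one index, and differences between a block-pair rectangle and its
   partial rectangles.  Their integrals are at most (i+1)^2 (l+1)^2 times the coefficient mass of the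
   block pair, up to constants, and the hypothesis on the coefficients is exactly the summability of
   (i+1)^2 (l+1)^2 times these masses.  Hence, off a null set, the weighted majorants are summable over
   all block pairs.  At such a point the series of block-pair sums converges absolutely; its sum is
   g by Fatou's lemma along the square partial sums.  The error s(m,n) - g then splits into the tail
   of the block series, a column strip, a row strip and a remainder inside the current block pair;
   the strips are weighted Cauchy-Schwarz sums over earlier blocks, and the Cesaro mean of each piece is
   controlled by the majorants, with weights that tend to zero by Tannery's theorem. *)

lemma sum_Ioc_split:
  fixes h :: "nat \<Rightarrow> 'b::comm_monoid_add"
  assumes "a \<le> b" "b \<le> c"
  shows "(\<Sum>j\<in>{a<..c}. h j) = (\<Sum>j\<in>{a<..b}. h j) + (\<Sum>j\<in>{b<..c}. h j)"
proof -
  have "{a<..c} = {a<..b} \<union> {b<..c}" using assms by auto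
  then show ?thesis by (simp add: sum.union_disjoint ivl_disj_int)
qed

lemma sum_Ioc_eq_diff:
  fixes h :: "nat \<Rightarrow> 'b::ab_group_add"
  assumes "a \<le> b"
  shows "(\<Sum>j\<in>{a<..b}. h j) = (\<Sum>j\<in>{0<..b}. h j) - (\<Sum>j\<in>{0<..a}. h j)"
  using sum_Ioc_split[of 0 a b h] assms by simp

lemma sum_Ioc_grid:
  fixes h :: "nat \<Rightarrow> 'b::ab_group_add"
  assumes "mono e"
  shows "(\<Sum>t<N. \<Sum>j\<in>{e t<..e (Suc t)}. h j) = (\<Sum>j\<in>{e 0<..e N}. h j)"
proof -
  have "(\<Sum>t<N. \<Sum>j\<in>{e t<..e (Suc t)}. h j) =
        (\<Sum>t<N. (\<Sum>j\<in>{0<..e (Suc t)}. h j) - (\<Sum>j\<in>{0<..e t}. h j))"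
    using assms by (intro sum.cong refl sum_Ioc_eq_diff) (auto simp: mono_def)
  also have "\<dots> = (\<Sum>j\<in>{0<..e N}. h j) - (\<Sum>j\<in>{0<..e 0}. h j)"
    by (rule sum_lessThan_telescope)
  also have "\<dots> = (\<Sum>j\<in>{e 0<..e N}. h j)"
    using assms by (intro sum_Ioc_eq_diff[symmetric]) (auto simp: mono_def)
  finally show ?thesis .
qed

lemma sum_Ioc_grid_atMost:
  fixes h :: "nat \<Rightarrow> 'b::ab_group_add"
  assumes "mono e"
  shows "(\<Sum>n\<in>{e 0<..e N} \<inter> {..Q}. h n) = (\<Sum>t<N. \<Sum>n\<in>{e t<..e (Suc t)} \<inter> {..Q}. h n)"
  using sum_Ioc_grid[OF assms, of "\<lambda>n. if n \<in> {..Q} then h n else 0" N]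
  by (simp add: sum.inter_restrict)

lemma card_Ioc_inter_atMost_le: "card ({a<..b} \<inter> {..Q}) \<le> (Q::nat)"
proof -
  have "{a<..b} \<inter> {..Q} \<subseteq> {1..Q}" by auto
  then show ?thesis using card_mono[of "{1..Q}"] by fastforce
qed

lemma sum_grid_atMost_const_le:
  fixes C :: real and e :: "nat \<Rightarrow> nat"
  assumes "mono e" "C \<ge> 0"
  shows "(\<Sum>t<N. \<Sum>m\<in>{e t<..e (Suc t)} \<inter> {..P}. C) \<le> P * C"
proof -
  have "(\<Sum>t<N. \<Sum>m\<in>{e t<..e (Suc t)} \<inter> {..P}. C) = (\<Sum>m\<in>{e 0<..e N} \<inter> {..P}. C)"
    by (rule sum_Ioc_grid_atMost[OF assms(1), symmetric])
  also have "\<dots> \<le> P * C"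
    using card_Ioc_inter_atMost_le[of "e 0" "e N" P] assms(2) by (simp add: mult_right_mono)
  finally show ?thesis .
qed

text \<open>A cell \<open>{a<..b}\<close> that meets \<open>{..P}\<close> has \<open>max 1 a \<le> P\<close>.\<close>

lemma sum_Ioc_inter_atMost_le_average:
  fixes h :: "nat \<Rightarrow> real"
  assumes "\<And>m. m \<in> {a<..b} \<Longrightarrow> h m \<ge> 0"
  shows "(\<Sum>m\<in>{a<..b} \<inter> {..P}. h m) \<le> P * ((1 / max 1 (real a)) * (\<Sum>m\<in>{a<..b}. h m))"
proof (cases "{a<..b} \<inter> {..P} = {}")
  case True
  then show ?thesis using assms by (auto intro!: mult_nonneg_nonneg divide_nonneg_nonneg sum_nonneg)
next
  case False
  then obtain n where "a < n" "n \<le> P" by auto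
  then have P: "max 1 (real a) \<le> P" by simp
  have "(\<Sum>m\<in>{a<..b} \<inter> {..P}. h m) \<le> (\<Sum>m\<in>{a<..b}. h m)"
    using assms by (intro sum_mono2) auto
  also have "\<dots> = max 1 (real a) * ((1 / max 1 (real a)) * (\<Sum>m\<in>{a<..b}. h m))"
    by simp
  also have "\<dots> \<le> P * ((1 / max 1 (real a)) * (\<Sum>m\<in>{a<..b}. h m))"
    using assms by (intro mult_right_mono P mult_nonneg_nonneg sum_nonneg) auto
  finally show ?thesis .
qed

lemma sum_grid_atMost_le_average:
  fixes h :: "nat \<Rightarrow> nat \<Rightarrow> real" and e :: "nat \<Rightarrow> nat"
  assumes "mono e" "C \<ge> 0" "\<And>t n. n \<in> {e t<..e (Suc t)} \<Longrightarrow> h t n \<ge> 0"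
  shows "(\<Sum>t<N. \<Sum>n\<in>{e t<..e (Suc t)} \<inter> {..Q}. C + h t n)
    \<le> Q * (C + (\<Sum>t<N. (1 / max 1 (real (e t))) * (\<Sum>n\<in>{e t<..e (Suc t)}. h t n)))"
proof -
  have "(\<Sum>t<N. \<Sum>n\<in>{e t<..e (Suc t)} \<inter> {..Q}. C + h t n)
      = (\<Sum>t<N. \<Sum>n\<in>{e t<..e (Suc t)} \<inter> {..Q}. C) + (\<Sum>t<N. \<Sum>n\<in>{e t<..e (Suc t)} \<inter> {..Q}. h t n)"
    by (simp add: sum.distrib)
  also have "\<dots> \<le> Q * C + (\<Sum>t<N. Q * ((1 / max 1 (real (e t))) * (\<Sum>n\<in>{e t<..e (Suc t)}. h t n)))"
    using assms by (intro add_mono sum_grid_atMost_const_le sum_mono sum_Ioc_inter_atMost_le_average)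
  finally show ?thesis by (simp add: distrib_left sum_distrib_left)
qed

lemma scaled_sum_mult_add:
  fixes a b :: real and f g :: "nat \<Rightarrow> real"
  shows "(1 / b) * (\<Sum>n\<in>N. a * f n + g n) = a * ((1 / b) * (\<Sum>n\<in>N. f n)) + (1 / b) * (\<Sum>n\<in>N. g n)"
  by (simp add: sum.distrib sum_distrib_left[symmetric] algebra_simps)

section \<open>The Rademacher--Menshov decomposition\<close>

definition dyadic_floor :: "nat \<Rightarrow> nat \<Rightarrow> nat" where
  "dyadic_floor r l = r div 2^l * 2^l"

lemma dyadic_floor_0 [simp]: "dyadic_floor r 0 = r"
  unfolding dyadic_floor_def by simp

lemma dyadic_floor_eq_0: "r < 2^L \<Longrightarrow> dyadic_floor r L = 0"
  unfolding dyadic_floor_def by simp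

lemma dyadic_floor_le: "dyadic_floor r l \<le> r"
  unfolding dyadic_floor_def by (metis div_mult_mod_eq le_add1)

lemma dyadic_floor_Suc:
  "dyadic_floor r (Suc l) = r div 2^l div 2 * 2 * 2^l"
  unfolding dyadic_floor_def by (simp only: power_Suc2 div_mult2_eq mult.assoc)

lemma dyadic_floor_Suc_le: "dyadic_floor r (Suc l) \<le> dyadic_floor r l"
  unfolding dyadic_floor_Suc by (simp add: dyadic_floor_def)

lemma dyadic_floor_step:
  "dyadic_floor r l = dyadic_floor r (Suc l) \<or> dyadic_floor r l = dyadic_floor r (Suc l) + 2^l"
proof -
  define q where "q = r div 2^l"
  have "q = q div 2 * 2 \<or> q = q div 2 * 2 + 1" by presburger
  then have "q * 2^l = q div 2 * 2 * 2^l \<or> q * 2^l = q div 2 * 2 * 2^l + 2^l"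
    by (metis distrib_right mult_1)
  then show ?thesis
    unfolding dyadic_floor_Suc by (simp add: dyadic_floor_def q_def)
qed

text \<open>Writing \<open>r = \<Sum>l. b\<^sub>l 2\<^sup>l\<close> in binary, the interval \<open>(e 0, e r]\<close> is the disjoint union of the
  dyadic cells \<open>(e (dyadic_floor r (l+1)), e (dyadic_floor r l)]\<close>, one (possibly empty) cell per level.\<close>

lemma sum_Ioc_dyadic_decomp:
  fixes h :: "nat \<Rightarrow> real"
  assumes "mono e" "r < 2^(Suc L)"
  shows "(\<Sum>j\<in>{e 0<..e r}. h j)
    = (\<Sum>l\<le>L. \<Sum>j\<in>{e (dyadic_floor r (Suc l))<..e (dyadic_floor r l)}. h j)"
proof -
  let ?P = "\<lambda>y. \<Sum>j\<in>{0<..y}. h j"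
  have "(\<Sum>l\<le>L. \<Sum>j\<in>{e (dyadic_floor r (Suc l))<..e (dyadic_floor r l)}. h j) =
        (\<Sum>l\<le>L. ?P (e (dyadic_floor r l)) - ?P (e (dyadic_floor r (Suc l))))"
    using assms dyadic_floor_Suc_le by (intro sum.cong refl sum_Ioc_eq_diff) (auto simp: mono_def)
  also have "\<dots> = ?P (e (dyadic_floor r 0)) - ?P (e (dyadic_floor r (Suc L)))"
    by (rule sum_telescope)
  also have "\<dots> = ?P (e r) - ?P (e 0)"
    using assms by (simp add: dyadic_floor_eq_0)
  also have "\<dots> = (\<Sum>j\<in>{e 0<..e r}. h j)"
    using assms by (intro sum_Ioc_eq_diff[symmetric]) (auto simp: mono_def)
  finally show ?thesis by simp
qed

definition rm_majorant :: "(nat \<Rightarrow> nat) \<Rightarrow> nat \<Rightarrow> (nat \<Rightarrow> real) \<Rightarrow> real" where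
  "rm_majorant e L h = (\<Sum>l\<le>L. \<Sum>u<2^(L-l). (\<Sum>j\<in>{e (u*2^l)<..e (Suc u*2^l)}. h j)\<^sup>2)"

lemma rm_majorant_nonneg: "rm_majorant e L h \<ge> 0"
  unfolding rm_majorant_def by (intro sum_nonneg) auto

lemma dyadic_cell_square_le:
  fixes h :: "nat \<Rightarrow> real"
  assumes "r \<le> 2^L" "l \<le> L"
  shows "(\<Sum>j\<in>{e (dyadic_floor r (Suc l))<..e (dyadic_floor r l)}. h j)\<^sup>2
       \<le> (\<Sum>u<2^(L-l). (\<Sum>j\<in>{e (u*2^l)<..e (Suc u*2^l)}. h j)\<^sup>2)"
proof (cases "dyadic_floor r l = dyadic_floor r (Suc l)")
  case True
  then show ?thesis by (simp add: sum_nonneg)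
next
  case False
  define u where "u = r div 2^l div 2 * 2"
  have lo: "dyadic_floor r (Suc l) = u * 2^l"
    unfolding u_def dyadic_floor_Suc ..
  then have hi: "dyadic_floor r l = Suc u * 2^l"
    using dyadic_floor_step[of r l] False by auto
  have "Suc u * 2^l \<le> 2^(L-l) * 2^l"
    using hi dyadic_floor_le[of r l] assms by (simp flip: power_add)
  then have "u < 2^(L-l)" by (simp del: mult_Suc)
  then show ?thesis unfolding lo hi by (intro member_le_sum) auto
qed

theorem rm_majorant_bound:
  fixes h :: "nat \<Rightarrow> real"
  assumes "mono e" "r \<le> 2^L"
  shows "(\<Sum>j\<in>{e 0<..e r}. h j)\<^sup>2 \<le> (L+1) * rm_majorant e L h"
proof -
  let ?cell = "\<lambda>l. \<Sum>j\<in>{e (dyadic_floor r (Suc l))<..e (dyadic_floor r l)}. h j"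
  have "(\<Sum>j\<in>{e 0<..e r}. h j)\<^sup>2 = (\<Sum>l\<le>L. ?cell l)\<^sup>2"
    using sum_Ioc_dyadic_decomp[OF assms(1), of r L] assms(2) by (simp add: order_le_less_trans)
  also have "\<dots> \<le> (\<Sum>l\<le>L. (?cell l)\<^sup>2) * card {..L}"
    by (rule sum_squared_le_sum_of_squares)
  also have "\<dots> = (\<Sum>l\<le>L. (?cell l)\<^sup>2) * (L+1)"
    by simp
  also have "\<dots> \<le> rm_majorant e L h * (L+1)"
    unfolding rm_majorant_def
    by (intro mult_right_mono sum_mono dyadic_cell_square_le) (use assms in auto)
  finally show ?thesis by (simp add: mult.commute add.commute)
qed

lemma sum_dyadic_level:
  fixes h :: "nat \<Rightarrow> 'b::ab_group_add"
  assumes "mono e" "l \<le> L"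
  shows "(\<Sum>u<2^(L-l). \<Sum>j\<in>{e (u*2^l)<..e (Suc u*2^l)}. h j) = (\<Sum>j\<in>{e 0<..e (2^L)}. h j)"
proof -
  have "mono (\<lambda>u. e (u*2^l))" using assms(1) by (auto simp: mono_def)
  moreover have "(2::nat)^(L-l) * 2^l = 2^L" using assms by (simp flip: power_add)
  ultimately show ?thesis using sum_Ioc_grid[of "\<lambda>u. e (u*2^l)" h "2^(L-l)"] by simp
qed

lemma square_add_le: "(a + b)\<^sup>2 \<le> 2 * a\<^sup>2 + 2 * (b::real)\<^sup>2"
proof -
  have "0 \<le> (a - b)\<^sup>2" by simp
  then show ?thesis by (simp add: power2_eq_square algebra_simps)
qed

lemma square_diff_le: "(a - b)\<^sup>2 \<le> 2 * a\<^sup>2 + 2 * (b::real)\<^sup>2"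
  using square_add_le[of a "-b"] by simp

lemma square_add3_le: "(a + b + c)\<^sup>2 \<le> 3 * (a\<^sup>2 + b\<^sup>2 + (c::real)\<^sup>2)"
proof -
  have "0 \<le> (a - b)\<^sup>2 + (b - c)\<^sup>2 + (a - c)\<^sup>2" by simp
  then show ?thesis by (simp add: power2_eq_square algebra_simps)
qed

lemma square_diff_add4_le:
  "(f - (a + b + c + d))\<^sup>2 \<le> 5 * (f\<^sup>2 + a\<^sup>2 + b\<^sup>2 + c\<^sup>2 + (d::real)\<^sup>2)"
proof -
  have "(\<Sum>i<5::nat. [f, -a, -b, -c, -d] ! i)\<^sup>2 \<le> (\<Sum>i<5::nat. ([f, -a, -b, -c, -d] ! i)\<^sup>2) * card {..<5::nat}"
    by (rule sum_squared_le_sum_of_squares)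
  then show ?thesis by (simp add: numeral_eq_Suc algebra_simps)
qed

lemma abs_le_inverse_plus_square:
  fixes w y :: real
  assumes "w > 0"
  shows "\<bar>y\<bar> \<le> (1 / w + w * y\<^sup>2) / 2"
proof -
  have "0 \<le> (1 - w * \<bar>y\<bar>)\<^sup>2 / w" using assms by simp
  also have "(1 - w * \<bar>y\<bar>)\<^sup>2 / w = 1 / w - 2 * \<bar>y\<bar> + w * y\<^sup>2"
    using assms by (simp add: power2_eq_square field_simps)
  finally show ?thesis by simp
qed

lemma sum_inverse_squares_le: "(\<Sum>i<I. 1 / (real i + 1)^2) \<le> 2"
proof -
  have basel: "(\<lambda>i. 1 / (real i + 1)^2) sums (pi\<^sup>2 / 6)"
    using inverse_squares_sums by (simp add: add.commute)
  have "(\<Sum>i<I. 1 / (real i + 1)^2) \<le> (\<Sum>i. 1 / (real i + 1)^2)"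
    using basel by (intro sum_le_suminf) (auto simp: sums_iff)
  also have "\<dots> = pi\<^sup>2 / 6"
    using basel by (simp add: sums_iff)
  also have "\<dots> \<le> (17/5)\<^sup>2 / 6"
    using pi_approx(2) by (intro divide_right_mono power_mono) auto
  also have "\<dots> \<le> 2"
    by (simp add: power2_eq_square)
  finally show ?thesis .
qed

lemma double_sum_inverse_squares_le:
  "(\<Sum>i<I. \<Sum>l<L. 1 / ((real i + 1)^2 * (real l + 1)^2)) \<le> 4"
proof -
  have "(\<Sum>i<I. \<Sum>l<L. 1 / ((real i + 1)^2 * (real l + 1)^2))
      = (\<Sum>i<I. 1 / (real i + 1)^2) * (\<Sum>l<L. 1 / (real l + 1)^2)"
    by (simp add: sum_product)
  also have "\<dots> \<le> 2 * 2"
    by (intro mult_mono sum_inverse_squares_le) (auto intro: sum_nonneg)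
  finally show ?thesis by simp
qed

text \<open>Cauchy--Schwarz against the weights \<open>1/(i+1)\<close>, whose squares sum to at most \<open>2\<close>.\<close>

lemma square_sum_le_weighted:
  "(\<Sum>i<I. y i)\<^sup>2 \<le> 2 * (\<Sum>i<I. (real i + 1)^2 * (y i :: real)\<^sup>2)"
proof -
  have "(\<Sum>i<I. y i)\<^sup>2 = (\<Sum>i<I. (1 / (real i + 1)) * ((real i + 1) * y i))\<^sup>2"
    by (intro arg_cong[where f="\<lambda>z. z\<^sup>2"] sum.cong refl) (simp add: field_simps)
  also have "\<dots> \<le> (\<Sum>i<I. (1 / (real i + 1))\<^sup>2) * (\<Sum>i<I. ((real i + 1) * y i)\<^sup>2)"
    by (rule Cauchy_Schwarz_ineq_sum)
  also have "\<dots> = (\<Sum>i<I. 1 / (real i + 1)^2) * (\<Sum>i<I. (real i + 1)^2 * (y i)\<^sup>2)"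
    by (simp add: power_divide power_mult_distrib)
  also have "\<dots> \<le> 2 * (\<Sum>i<I. (real i + 1)^2 * (y i)\<^sup>2)"
    by (intro mult_right_mono sum_inverse_squares_le sum_nonneg) auto
  finally show ?thesis .
qed

lemma ennreal_double_suminf_le:
  fixes b :: "nat \<Rightarrow> nat \<Rightarrow> real"
  assumes b0: "\<And>i l. b i l \<ge> 0" and bK: "\<And>I L. (\<Sum>i<I. \<Sum>l<L. b i l) \<le> K"
  shows "(\<Sum>i. \<Sum>l. ennreal (b i l)) \<le> ennreal K"
  unfolding suminf_eq_SUP[of "\<lambda>i. \<Sum>l. ennreal (b i l)"]
proof (rule SUP_least)
  fix I
  have "(\<Sum>i<I. \<Sum>l. ennreal (b i l)) = (\<Sum>l. \<Sum>i<I. ennreal (b i l))"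
    by (rule suminf_sum[symmetric]) auto
  also have "\<dots> \<le> ennreal K"
    unfolding suminf_eq_SUP
  proof (rule SUP_least)
    fix L
    have "(\<Sum>l<L. \<Sum>i<I. ennreal (b i l)) = ennreal (\<Sum>i<I. \<Sum>l<L. b i l)"
      using b0 by (simp add: sum_nonneg sum.swap[of _ "{..<L}"])
    also have "\<dots> \<le> ennreal K" using bK by (intro ennreal_leI)
    finally show "(\<Sum>l<L. \<Sum>i<I. ennreal (b i l)) \<le> ennreal K" .
  qed
  finally show "(\<Sum>i<I. \<Sum>l. ennreal (b i l)) \<le> ennreal K" .
qed

lemma summable_double_if_ennreal_dominated:
  fixes a b :: "nat \<Rightarrow> nat \<Rightarrow> real"
  assumes a0: "\<And>i l. 0 \<le> a i l" and ab: "\<And>i l. a i l \<le> b i l"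
    and fin: "(\<Sum>i. \<Sum>l. ennreal (b i l)) \<noteq> top"
  shows "summable (a i)" "summable (\<lambda>i. suminf (a i))"
proof -
  have "(\<Sum>i. \<Sum>l. ennreal (a i l)) \<le> (\<Sum>i. \<Sum>l. ennreal (b i l))"
    using a0 ab by (intro suminf_le summableI ennreal_leI) auto
  with fin have lt: "(\<Sum>i. \<Sum>l. ennreal (a i l)) < top"
    by (simp add: less_top top_unique)
  show s: "summable (a i)" for i
    using ennreal_suminf_lessD[OF lt, of i] by (intro summable_suminf_not_top a0) simp
  have "(\<Sum>l. ennreal (a i l)) = ennreal (suminf (a i))" for i
    by (rule suminf_ennreal2[OF a0 s])
  with lt show "summable (\<lambda>i. suminf (a i))"
    by (intro summable_suminf_not_top suminf_nonneg[OF s a0]) auto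
qed

lemma suminf_shift_abs_le:
  fixes f :: "nat \<Rightarrow> real"
  assumes "summable (\<lambda>l. \<bar>f l\<bar>)"
  shows "0 \<le> (\<Sum>k. \<bar>f (k + b)\<bar>)" "(\<Sum>k. \<bar>f (k + b)\<bar>) \<le> (\<Sum>l. \<bar>f l\<bar>)"
proof -
  have "summable (\<lambda>k. \<bar>f (k + b)\<bar>)" using assms by (subst summable_iff_shift)
  then show "0 \<le> (\<Sum>k. \<bar>f (k + b)\<bar>)" by (intro suminf_nonneg) auto
  show "(\<Sum>k. \<bar>f (k + b)\<bar>) \<le> (\<Sum>l. \<bar>f l\<bar>)"
    using suminf_split_initial_segment[OF assms, of b] by (simp add: sum_nonneg)
qed

context
  fixes F :: "nat \<Rightarrow> nat \<Rightarrow> real"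
  assumes rows: "\<And>i. summable (\<lambda>l. \<bar>F i l\<bar>)" and total: "summable (\<lambda>i. \<Sum>l. \<bar>F i l\<bar>)"
begin

lemma summable_row_shift: "summable (\<lambda>k. \<bar>F i (k + b)\<bar>)"
  using rows[of i] by (subst summable_iff_shift)

lemma summable_column_tails: "summable (\<lambda>i. \<Sum>k. \<bar>F i (k + b)\<bar>)"
  by (rule summable_comparison_test[OF _ total])
    (use suminf_shift_abs_le[OF rows] in auto)

lemma tendsto_column_tails: "((\<lambda>b. \<Sum>i. \<Sum>k. \<bar>F i (k + b)\<bar>) \<longlongrightarrow> 0) sequentially"
proof -
  have "((\<lambda>b. \<Sum>i. \<Sum>k. \<bar>F i (k + b)\<bar>) \<longlongrightarrow> (\<Sum>i. 0)) sequentially"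
  proof (rule tannerys_theorem[THEN conjunct2, THEN conjunct2])
    show "((\<lambda>b. \<Sum>k. \<bar>F i (k + b)\<bar>) \<longlongrightarrow> 0) sequentially" for i
      using suminf_exist_split2[OF rows[of i]] by simp
    show "\<forall>\<^sub>F (i, b) in at_top \<times>\<^sub>F sequentially. norm (\<Sum>k. \<bar>F i (k + b)\<bar>) \<le> (\<Sum>l. \<bar>F i l\<bar>)"
      using suminf_shift_abs_le[OF rows] by (intro always_eventually) auto
  qed (use total in auto)
  then show ?thesis by simp
qed

text \<open>The rectangle \<open>[0,a) \<times> [0,b)\<close> misses only the rows \<open>\<ge> a\<close> and the columns \<open>\<ge> b\<close>.\<close>

lemma double_suminf_rect_error_le:
  "\<bar>(\<Sum>i<a. \<Sum>l<b. F i l) - (\<Sum>i. \<Sum>l. F i l)\<bar>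
     \<le> (\<Sum>k. \<Sum>l. \<bar>F (k + a) l\<bar>) + (\<Sum>i. \<Sum>k. \<bar>F i (k + b)\<bar>)"
proof -
  define t where "t i = (\<Sum>l. \<bar>F i l\<bar>)" for i
  define \<rho> where "\<rho> i = (\<Sum>l. F i l)" for i
  have \<rho>_le: "\<bar>\<rho> i\<bar> \<le> t i" for i unfolding \<rho>_def t_def by (rule summable_rabs[OF rows])
  have s\<rho>: "summable (\<lambda>i. \<bar>\<rho> i\<bar>)"
    by (rule summable_comparison_test[OF _ total[folded t_def]]) (use \<rho>_le in auto)
  have "(\<Sum>i. \<rho> i) = (\<Sum>k. \<rho> (k + a)) + (\<Sum>i<a. \<rho> i)"
    using summable_rabs_cancel[OF s\<rho>] by (rule suminf_split_initial_segment)
  moreover have "\<rho> i = (\<Sum>k. F i (k + b)) + (\<Sum>l<b. F i l)" for i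
    unfolding \<rho>_def using summable_rabs_cancel[OF rows] by (rule suminf_split_initial_segment)
  ultimately have "(\<Sum>i. \<Sum>l. F i l) - (\<Sum>i<a. \<Sum>l<b. F i l)
      = (\<Sum>k. \<rho> (k + a)) + (\<Sum>i<a. \<Sum>k. F i (k + b))"
    unfolding \<rho>_def by (simp add: sum.distrib)
  moreover have "\<bar>\<Sum>k. \<rho> (k + a)\<bar> \<le> (\<Sum>k. t (k + a))"
  proof -
    have "summable (\<lambda>k. \<bar>\<rho> (k + a)\<bar>)" "summable (\<lambda>k. t (k + a))"
      using s\<rho> total[folded t_def] by (subst summable_iff_shift; simp)+
    then have "\<bar>\<Sum>k. \<rho> (k + a)\<bar> \<le> (\<Sum>k. \<bar>\<rho> (k + a)\<bar>)" by (intro summable_rabs)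
    also have "\<dots> \<le> (\<Sum>k. t (k + a))" by (intro suminf_le \<rho>_le) fact+
    finally show ?thesis .
  qed
  moreover have "\<bar>\<Sum>i<a. \<Sum>k. F i (k + b)\<bar> \<le> (\<Sum>i. \<Sum>k. \<bar>F i (k + b)\<bar>)"
  proof -
    have "\<bar>\<Sum>i<a. \<Sum>k. F i (k + b)\<bar> \<le> (\<Sum>i<a. \<Sum>k. \<bar>F i (k + b)\<bar>)"
      by (intro order_trans[OF sum_abs] sum_mono summable_rabs summable_row_shift)
    also have "\<dots> \<le> (\<Sum>i. \<Sum>k. \<bar>F i (k + b)\<bar>)"
      by (intro sum_le_suminf summable_column_tails suminf_shift_abs_le[OF rows]) auto
    finally show ?thesis .
  qed
  ultimately show ?thesis unfolding t_def by linarith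
qed

end

lemma cesaro_mean_tendsto_zero:
  fixes u :: "nat \<Rightarrow> real"
  assumes u0: "\<And>m. u m \<ge> 0" and lim: "(u \<longlongrightarrow> 0) sequentially"
  shows "((\<lambda>P. (1 / real P) * (\<Sum>m\<in>{1..P}. u m)) \<longlongrightarrow> 0) sequentially"
proof (rule LIMSEQ_I)
  fix r :: real assume r: "r > 0"
  obtain N where N: "\<And>m. m \<ge> N \<Longrightarrow> u m < r / 2"
    using lim r unfolding LIMSEQ_def by (metis dist_real_def diff_zero abs_of_nonneg u0 half_gt_zero)
  define C where "C = (\<Sum>m\<in>{1..N}. u m)"
  obtain N2 :: nat where N2: "real N2 > 2 * C / r" using reals_Archimedean2 by blast
  show "\<exists>no. \<forall>n\<ge>no. norm ((1 / real n) * (\<Sum>m\<in>{1..n}. u m) - 0) < r"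
  proof (intro exI allI impI)
    fix P assume P: "P \<ge> max (Suc N) (Suc N2)"
    have "(\<Sum>m\<in>{1..P}. u m) = C + (\<Sum>m\<in>{Suc N..P}. u m)"
      unfolding C_def using P by (subst sum.union_disjoint[symmetric]) (auto intro!: sum.cong)
    also have "(\<Sum>m\<in>{Suc N..P}. u m) \<le> (\<Sum>m\<in>{Suc N..P}. r / 2)"
      by (intro sum_mono less_imp_le N) auto
    also have "\<dots> \<le> real P * (r / 2)" using r by simp
    also have "C < real P * (r / 2)"
    proof -
      have "2 * C / r < real P" using N2 P by linarith
      then show ?thesis using r by (simp add: field_simps)
    qed
    finally have "(1 / real P) * (\<Sum>m\<in>{1..P}. u m) < r"
      using P by (simp add: field_simps)
    moreover have "(1 / real P) * (\<Sum>m\<in>{1..P}. u m) \<ge> 0"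
      using u0 by (auto intro!: divide_nonneg_nonneg sum_nonneg)
    ultimately show "norm ((1 / real P) * (\<Sum>m\<in>{1..P}. u m) - 0) < r"
      by simp
  qed
qed

lemma AE_double_suminf_finite:
  fixes f :: "nat \<Rightarrow> nat \<Rightarrow> 'a \<Rightarrow> real"
  assumes int: "\<And>i l. integrable M (f i l)" and nonneg: "\<And>i l x. f i l x \<ge> 0"
    and bound: "\<And>I L. (\<Sum>i<I. \<Sum>l<L. \<integral>x. f i l x \<partial>M) \<le> K"
  shows "AE x in M. (\<Sum>i. \<Sum>l. ennreal (f i l x)) \<noteq> top"
proof -
  have meas [measurable]: "f i l \<in> borel_measurable M" for i l
    using int by (rule borel_measurable_integrable)
  have "(\<integral>\<^sup>+x. (\<Sum>i. \<Sum>l. ennreal (f i l x)) \<partial>M) = (\<Sum>i. \<integral>\<^sup>+x. (\<Sum>l. ennreal (f i l x)) \<partial>M)"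
    by (rule nn_integral_suminf) measurable
  also have "\<dots> = (\<Sum>i. \<Sum>l. \<integral>\<^sup>+x. ennreal (f i l x) \<partial>M)"
    by (intro suminf_cong nn_integral_suminf) measurable
  also have "\<dots> = (\<Sum>i. \<Sum>l. ennreal (\<integral>x. f i l x \<partial>M))"
    using int nonneg by (simp add: nn_integral_eq_integral)
  also have "\<dots> \<le> ennreal K"
    using nonneg bound by (intro ennreal_double_suminf_le integral_nonneg_AE) auto
  finally have "(\<integral>\<^sup>+x. (\<Sum>i. \<Sum>l. ennreal (f i l x)) \<partial>M) \<noteq> \<infinity>"
    by (auto simp: top_unique)
  then show ?thesis
    using nn_integral_PInf_AE[of "\<lambda>x. \<Sum>i. \<Sum>l. ennreal (f i l x)"] by simp
qed

text \<open>Fatou's lemma applied to \<open>(s a - g)\<^sup>2\<close>.\<close>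

lemma AE_pointwise_limit_eq_L2_limit:
  fixes s :: "nat \<Rightarrow> 'a \<Rightarrow> real"
  assumes [measurable]: "\<And>a. s a \<in> borel_measurable M" "g \<in> borel_measurable M"
    and integrable: "\<And>a. integrable M (\<lambda>x. (s a x - g x)\<^sup>2)"
    and L2: "((\<lambda>a. \<integral>x. (s a x - g x)\<^sup>2 \<partial>M) \<longlongrightarrow> 0) sequentially"
  shows "AE x in M. \<forall>y. ((\<lambda>a. s a x) \<longlongrightarrow> y) sequentially \<longrightarrow> y = g x"
proof -
  define u where "u a x = ennreal ((s a x - g x)\<^sup>2)" for a x
  have [measurable]: "u a \<in> borel_measurable M" for a
    unfolding u_def by measurable
  have integral: "integral\<^sup>N M (u a) = ennreal (\<integral>x. (s a x - g x)\<^sup>2 \<partial>M)" for a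
    unfolding u_def using integrable by (intro nn_integral_eq_integral) auto
  have "((\<lambda>a. integral\<^sup>N M (u a)) \<longlongrightarrow> ennreal 0) sequentially"
    unfolding integral by (intro tendsto_ennrealI L2)
  then have "liminf (\<lambda>a. integral\<^sup>N M (u a)) = 0"
    by (intro lim_imp_Liminf) auto
  with nn_integral_liminf[of u M] have "(\<integral>\<^sup>+x. liminf (\<lambda>a. u a x) \<partial>M) = 0"
    by simp
  then have "AE x in M. liminf (\<lambda>a. u a x) = 0"
    by (subst (asm) nn_integral_0_iff_AE) auto
  then show ?thesis
  proof (rule AE_mp, intro AE_I2 allI impI)
    fix x y assume "liminf (\<lambda>a. u a x) = 0" and "((\<lambda>a. s a x) \<longlongrightarrow> y) sequentially"
    then have "((\<lambda>a. u a x) \<longlongrightarrow> ennreal ((y - g x)\<^sup>2)) sequentially"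
      unfolding u_def by (intro tendsto_ennrealI tendsto_intros)
    then have "ennreal ((y - g x)\<^sup>2) = 0"
      using \<open>liminf (\<lambda>a. u a x) = 0\<close> by (metis lim_imp_Liminf trivial_limit_sequentially)
    then show "y = g x" by simp
  qed
qed

lemma (in finite_measure) integral_abs_le_inverse_plus_square:
  fixes f :: "'a \<Rightarrow> real"
  assumes meas: "f \<in> borel_measurable M" and square: "integrable M (\<lambda>x. (f x)\<^sup>2)" and "w > 0"
  shows "integrable M (\<lambda>x. \<bar>f x\<bar>)"
    "(\<integral>x. \<bar>f x\<bar> \<partial>M) \<le> measure M (space M) / (2 * w) + w * (\<integral>x. (f x)\<^sup>2 \<partial>M) / 2"
proof -
  have bound: "integrable M (\<lambda>x. (1 / w + w * (f x)\<^sup>2) / 2)"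
    using square by (intro integrable_divide Bochner_Integration.integrable_add integrable_mult_right) auto
  show abs: "integrable M (\<lambda>x. \<bar>f x\<bar>)"
  proof (rule Bochner_Integration.integrable_bound[OF bound])
    show "AE x in M. norm \<bar>f x\<bar> \<le> norm ((1 / w + w * (f x)\<^sup>2) / 2)"
      using abs_le_inverse_plus_square[OF \<open>w > 0\<close>] \<open>w > 0\<close> by (intro AE_I2) (auto simp: abs_of_nonneg)
  qed (use meas in measurable)
  have "(\<integral>x. \<bar>f x\<bar> \<partial>M) \<le> (\<integral>x. (1 / w + w * (f x)\<^sup>2) / 2 \<partial>M)"
    by (intro integral_mono abs bound abs_le_inverse_plus_square \<open>w > 0\<close>)
  also have "\<dots> = measure M (space M) / (2 * w) + w * (\<integral>x. (f x)\<^sup>2 \<partial>M) / 2"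
    using square by (simp add: Bochner_Integration.integral_add field_simps)
  finally show "(\<integral>x. \<bar>f x\<bar> \<partial>M) \<le> measure M (space M) / (2 * w) + w * (\<integral>x. (f x)\<^sup>2 \<partial>M) / 2" .
qed

section \<open>Orthonormal double series\<close>

locale orthonormal_double_series =
  fixes M :: "'a measure" and \<psi> :: "nat \<Rightarrow> nat \<Rightarrow> 'a \<Rightarrow> real" and c :: "nat \<Rightarrow> nat \<Rightarrow> real"
  assumes finite: "finite_measure M" and ons: "orthonormal_system2 M \<psi>"
begin

lemma sum_sum_delta:
  assumes "finite A" "finite B" "x \<in> A" "y \<in> B"
  shows "(\<Sum>j\<in>A. \<Sum>k\<in>B. if x = j \<and> y = k then f j k else 0) = (f x y :: real)"
proof -
  have "(\<Sum>j\<in>A. \<Sum>k\<in>B. if x = j \<and> y = k then f j k else 0) =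
        (\<Sum>j\<in>A. if x = j then (\<Sum>k\<in>B. if y = k then f j k else 0) else 0)"
    by (intro sum.cong) auto
  then show ?thesis using assms by simp
qed

definition rect_sum :: "nat set \<Rightarrow> nat set \<Rightarrow> 'a \<Rightarrow> real" where
  "rect_sum A B x = (\<Sum>j\<in>A. \<Sum>k\<in>B. c j k * \<psi> j k x)"

definition coef_mass :: "nat set \<Rightarrow> nat set \<Rightarrow> real" where
  "coef_mass A B = (\<Sum>j\<in>A. \<Sum>k\<in>B. (c j k)\<^sup>2)"

lemma psi_measurable: "j \<ge> 1 \<Longrightarrow> k \<ge> 1 \<Longrightarrow> \<psi> j k \<in> borel_measurable M"
  and psi_square_integrable: "j \<ge> 1 \<Longrightarrow> k \<ge> 1 \<Longrightarrow> integrable M (\<lambda>x. (\<psi> j k x)\<^sup>2)"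
  and psi_inner: "j \<ge> 1 \<Longrightarrow> k \<ge> 1 \<Longrightarrow> j' \<ge> 1 \<Longrightarrow> k' \<ge> 1 \<Longrightarrow>
     (\<integral>x. \<psi> j k x * \<psi> j' k' x \<partial>M) = (if j = j' \<and> k = k' then 1 else 0)"
  using ons unfolding orthonormal_system2_def by blast+

lemma psi_product_integrable:
  assumes "j \<ge> 1" "k \<ge> 1" "j' \<ge> 1" "k' \<ge> 1"
  shows "integrable M (\<lambda>x. \<psi> j k x * \<psi> j' k' x)"
proof (rule Bochner_Integration.integrable_bound[where f="\<lambda>x. (\<psi> j k x)\<^sup>2 + (\<psi> j' k' x)\<^sup>2"])
  show "integrable M (\<lambda>x. (\<psi> j k x)\<^sup>2 + (\<psi> j' k' x)\<^sup>2)"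
    using psi_square_integrable assms by auto
  show "(\<lambda>x. \<psi> j k x * \<psi> j' k' x) \<in> borel_measurable M"
    using psi_measurable assms by auto
  have "\<bar>y * z\<bar> \<le> y\<^sup>2 + z\<^sup>2" for y z :: real
  proof -
    have "0 \<le> (\<bar>y\<bar> - \<bar>z\<bar>)\<^sup>2" by simp
    then have "2 * (\<bar>y\<bar> * \<bar>z\<bar>) \<le> y\<^sup>2 + z\<^sup>2" by (simp add: power2_eq_square algebra_simps)
    moreover have "0 \<le> \<bar>y\<bar> * \<bar>z\<bar>" by simp
    ultimately show ?thesis unfolding abs_mult by linarith
  qed
  then show "AE x in M. norm (\<psi> j k x * \<psi> j' k' x) \<le> norm ((\<psi> j k x)\<^sup>2 + (\<psi> j' k' x)\<^sup>2)"
    by (intro AE_I2) simp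
qed

lemma rect_sum_measurable:
  "A \<subseteq> {0<..} \<Longrightarrow> B \<subseteq> {0<..} \<Longrightarrow> rect_sum A B \<in> borel_measurable M"
  unfolding rect_sum_def[abs_def] by (auto intro!: borel_measurable_sum borel_measurable_times psi_measurable)

lemma coef_mass_nonneg: "coef_mass A B \<ge> 0"
  unfolding coef_mass_def by (intro sum_nonneg) auto

lemma rect_sum_square_integral:
  assumes "A \<subseteq> {0<..}" "B \<subseteq> {0<..}" "finite A" "finite B"
  shows "integrable M (\<lambda>x. (rect_sum A B x)\<^sup>2)" and "(\<integral>x. (rect_sum A B x)\<^sup>2 \<partial>M) = coef_mass A B"
proof -
  let ?t = "\<lambda>j k j' k' x. c j k * c j' k' * (\<psi> j k x * \<psi> j' k' x)"
  have square: "(rect_sum A B x)\<^sup>2 = (\<Sum>j\<in>A. \<Sum>k\<in>B. \<Sum>j'\<in>A. \<Sum>k'\<in>B. ?t j k j' k' x)" for x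
    unfolding rect_sum_def power2_eq_square sum_distrib_right sum_distrib_left
    by (simp add: mult_ac)
  have term_integrable: "integrable M (?t j k j' k')"
    if "j \<in> A" "k \<in> B" "j' \<in> A" "k' \<in> B" for j k j' k'
    using that assms by (intro integrable_mult_right psi_product_integrable) auto
  show "integrable M (\<lambda>x. (rect_sum A B x)\<^sup>2)"
    unfolding square by (fastforce intro: Bochner_Integration.integrable_sum term_integrable)
  have "(\<integral>x. (rect_sum A B x)\<^sup>2 \<partial>M)
      = (\<Sum>j\<in>A. \<Sum>k\<in>B. \<Sum>j'\<in>A. \<Sum>k'\<in>B. c j k * c j' k' * (if j = j' \<and> k = k' then 1 else 0))"
    unfolding square
    apply (subst Bochner_Integration.integral_sum, fastforce intro: term_integrable)
    apply (intro sum.cong refl)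
    apply (subst Bochner_Integration.integral_sum, fastforce intro: term_integrable)
    apply (intro sum.cong refl)
    apply (subst Bochner_Integration.integral_sum, fastforce intro: term_integrable)
    apply (intro sum.cong refl)
    apply (subst Bochner_Integration.integral_sum, fastforce intro: term_integrable)
    apply (intro sum.cong refl)
    using assms by (subst integral_mult_right_zero, subst psi_inner) auto
  also have "\<dots> = (\<Sum>j\<in>A. \<Sum>k\<in>B. c j k * c j k)"
    using assms by (intro sum.cong refl) (simp add: if_distrib sum_sum_delta cong: if_cong)
  finally show "(\<integral>x. (rect_sum A B x)\<^sup>2 \<partial>M) = coef_mass A B"
    unfolding coef_mass_def power2_eq_square .
qed

lemma Ioc_subset_greaterThan_0 [simp]: "{a<..b::nat} \<subseteq> {0<..}"
  by auto

lemma rect_sum_Ioc_square_integral [simp]: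
  "A \<subseteq> {0<..} \<Longrightarrow> finite A \<Longrightarrow> integrable M (\<lambda>x. (rect_sum A {a<..b} x)\<^sup>2)"
  "A \<subseteq> {0<..} \<Longrightarrow> finite A \<Longrightarrow> (\<integral>x. (rect_sum A {a<..b} x)\<^sup>2 \<partial>M) = coef_mass A {a<..b}"
  using rect_sum_square_integral[of A "{a<..b}"] by auto

definition col_sum :: "nat set \<Rightarrow> 'a \<Rightarrow> nat \<Rightarrow> real" where
  "col_sum A x k = (\<Sum>j\<in>A. c j k * \<psi> j k x)"

definition row_sum :: "nat set \<Rightarrow> 'a \<Rightarrow> nat \<Rightarrow> real" where
  "row_sum B x j = (\<Sum>k\<in>B. c j k * \<psi> j k x)"

lemma rect_sum_eq_sum_col_sum: "rect_sum A B x = (\<Sum>k\<in>B. col_sum A x k)"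
  unfolding rect_sum_def col_sum_def by (rule sum.swap)

lemma rect_sum_eq_sum_row_sum: "rect_sum A B x = (\<Sum>j\<in>A. row_sum B x j)"
  unfolding rect_sum_def row_sum_def ..

lemma coef_mass_swap: "coef_mass A B = (\<Sum>k\<in>B. \<Sum>j\<in>A. (c j k)\<^sup>2)"
  unfolding coef_mass_def by (rule sum.swap)

lemma rect_sum_split_fst:
  "a \<le> b \<Longrightarrow> b \<le> d \<Longrightarrow> rect_sum {a<..d} B x = rect_sum {a<..b} B x + rect_sum {b<..d} B x"
  unfolding rect_sum_eq_sum_row_sum by (rule sum_Ioc_split)

lemma rect_sum_split_snd:
  "a \<le> b \<Longrightarrow> b \<le> d \<Longrightarrow> rect_sum A {a<..d} x = rect_sum A {a<..b} x + rect_sum A {b<..d} x"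
  unfolding rect_sum_eq_sum_col_sum by (rule sum_Ioc_split)

lemma coef_mass_mono_fst: "A \<subseteq> A' \<Longrightarrow> finite A' \<Longrightarrow> coef_mass A B \<le> coef_mass A' B"
  unfolding coef_mass_def by (intro sum_mono2) (auto intro!: sum_nonneg)

lemma coef_mass_mono_snd: "B \<subseteq> B' \<Longrightarrow> finite B' \<Longrightarrow> coef_mass A B \<le> coef_mass A B'"
  unfolding coef_mass_swap by (intro sum_mono2) (auto intro!: sum_nonneg)

lemma coef_mass_grid_fst: "mono e \<Longrightarrow> (\<Sum>t<N. coef_mass {e t<..e (Suc t)} B) = coef_mass {e 0<..e N} B"
  unfolding coef_mass_def by (rule sum_Ioc_grid)

lemma coef_mass_grid_snd: "mono e \<Longrightarrow> (\<Sum>t<N. coef_mass A {e t<..e (Suc t)}) = coef_mass A {e 0<..e N}"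
  unfolding coef_mass_swap by (rule sum_Ioc_grid)

lemma rm_majorant_col_sum:
  "rm_majorant e L (col_sum A x) = (\<Sum>l\<le>L. \<Sum>u<2^(L-l). (rect_sum A {e (u*2^l)<..e (Suc u*2^l)} x)\<^sup>2)"
  unfolding rm_majorant_def rect_sum_eq_sum_col_sum ..

lemma rm_majorant_row_sum:
  "rm_majorant e L (row_sum B x) = (\<Sum>l\<le>L. \<Sum>u<2^(L-l). (rect_sum {e (u*2^l)<..e (Suc u*2^l)} B x)\<^sup>2)"
  unfolding rm_majorant_def rect_sum_eq_sum_row_sum ..

lemma rm_majorant_col_sum_integral:
  fixes L :: nat and e :: "nat \<Rightarrow> nat"
  assumes "A \<subseteq> {0<..}" "finite A" "mono e"
  shows "integrable M (\<lambda>x. rm_majorant e L (col_sum A x))"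
    "(\<integral>x. rm_majorant e L (col_sum A x) \<partial>M) = (L+1) * coef_mass A {e 0<..e (2^L)}"
proof -
  show "integrable M (\<lambda>x. rm_majorant e L (col_sum A x))"
    unfolding rm_majorant_col_sum using assms by auto
  have "(\<integral>x. rm_majorant e L (col_sum A x) \<partial>M)
      = (\<Sum>l\<le>L. \<Sum>u<2^(L-l). coef_mass A {e (u*2^l)<..e (Suc u*2^l)})"
    unfolding rm_majorant_col_sum using assms
    by (simp add: Bochner_Integration.integral_sum Bochner_Integration.integrable_sum)
  also have "\<dots> = (\<Sum>l\<le>L. coef_mass A {e 0<..e (2^L)})"
    unfolding coef_mass_swap by (intro sum.cong refl sum_dyadic_level assms) auto
  finally show "(\<integral>x. rm_majorant e L (col_sum A x) \<partial>M) = (L+1) * coef_mass A {e 0<..e (2^L)}"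
    by simp
qed

lemma rm_majorant_row_sum_integral:
  fixes L :: nat and e :: "nat \<Rightarrow> nat"
  assumes "mono e"
  shows "integrable M (\<lambda>x. rm_majorant e L (row_sum {a<..b} x))"
    "(\<integral>x. rm_majorant e L (row_sum {a<..b} x) \<partial>M) = (L+1) * coef_mass {e 0<..e (2^L)} {a<..b}"
proof -
  show "integrable M (\<lambda>x. rm_majorant e L (row_sum {a<..b} x))"
    unfolding rm_majorant_row_sum by auto
  have "(\<integral>x. rm_majorant e L (row_sum {a<..b} x) \<partial>M)
      = (\<Sum>l\<le>L. \<Sum>u<2^(L-l). coef_mass {e (u*2^l)<..e (Suc u*2^l)} {a<..b})"
    unfolding rm_majorant_row_sum by (simp add: Bochner_Integration.integral_sum)
  also have "\<dots> = (\<Sum>l\<le>L. coef_mass {e 0<..e (2^L)} {a<..b})"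
    unfolding coef_mass_def by (intro sum.cong refl sum_dyadic_level assms) auto
  finally show "(\<integral>x. rm_majorant e L (row_sum {a<..b} x) \<partial>M) = (L+1) * coef_mass {e 0<..e (2^L)} {a<..b}"
    by simp
qed

end

section \<open>Tail majorants on tame grids\<close>

text \<open>Cells at most four times as long as their left end, so that averaging over a cell, normalised by
  its left end, costs at most a factor \<open>4\<close>.\<close>

definition tame_grid :: "(nat \<Rightarrow> nat) \<Rightarrow> nat \<Rightarrow> bool" where
  "tame_grid e N \<longleftrightarrow> mono e \<and> (\<forall>t<N. e (Suc t) - e t \<le> 4 * max 1 (e t))"

lemma tame_grid_mono: "tame_grid e N \<Longrightarrow> mono e"
  unfolding tame_grid_def by blast

lemma tame_grid_cell_ratio_le:
  assumes "tame_grid e N" "t < N"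
  shows "real (card {e t<..e (Suc t)}) / max 1 (real (e t)) \<le> 4"
proof -
  have "e (Suc t) - e t \<le> 4 * max 1 (e t)"
    using assms unfolding tame_grid_def by blast
  then have "real (e (Suc t) - e t) \<le> real (4 * max 1 (e t))"
    by (simp only: of_nat_le_iff)
  then have "real (e (Suc t) - e t) \<le> 4 * max 1 (real (e t))"
    by simp
  then show ?thesis by (simp add: divide_le_eq)
qed

lemma tame_grid_average_le:
  fixes h :: "nat \<Rightarrow> real"
  assumes "tame_grid e N" "t < N" "\<And>m. m \<in> {e t<..e (Suc t)} \<Longrightarrow> h m \<le> G" "G \<ge> 0"
  shows "(1 / max 1 (real (e t))) * (\<Sum>m\<in>{e t<..e (Suc t)}. h m) \<le> 4 * G"
proof -
  have "(\<Sum>m\<in>{e t<..e (Suc t)}. h m) \<le> (\<Sum>m\<in>{e t<..e (Suc t)}. G)"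
    using assms(3) by (intro sum_mono) auto
  then have "(1 / max 1 (real (e t))) * (\<Sum>m\<in>{e t<..e (Suc t)}. h m)
      \<le> (real (card {e t<..e (Suc t)}) / max 1 (real (e t))) * G"
    by (simp add: divide_right_mono)
  also have "\<dots> \<le> 4 * G"
    using assms(4) by (intro mult_right_mono tame_grid_cell_ratio_le[OF assms(1,2)])
  finally show ?thesis .
qed

context orthonormal_double_series
begin

definition cell_tail_average :: "nat set \<Rightarrow> (nat \<Rightarrow> nat) \<Rightarrow> nat \<Rightarrow> 'a \<Rightarrow> real" where
  "cell_tail_average A e t x =
     (1 / max 1 (real (e t))) * (\<Sum>n\<in>{e t<..e (Suc t)}. (rect_sum A {n<..e (Suc t)} x)\<^sup>2)"

text \<open>Majorant for the Cesaro means of the squared tails \<open>rect_sum A {n<..e (2\<^sup>L)}\<close>.\<close>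

definition tail_majorant :: "nat set \<Rightarrow> (nat \<Rightarrow> nat) \<Rightarrow> nat \<Rightarrow> 'a \<Rightarrow> real" where
  "tail_majorant A e L x = 4 * (rect_sum A {e 0<..e (2^L)} x)\<^sup>2 + 4 * (L+1) * rm_majorant e L (col_sum A x)
      + 2 * (\<Sum>t<2^L. cell_tail_average A e t x)"

lemma cell_tail_average_nonneg: "cell_tail_average A e t x \<ge> 0"
  unfolding cell_tail_average_def by (auto intro!: sum_nonneg divide_nonneg_nonneg)

lemma tail_majorant_nonneg: "tail_majorant A e L x \<ge> 0"
  unfolding tail_majorant_def using rm_majorant_nonneg cell_tail_average_nonneg
  by (auto intro!: add_nonneg_nonneg sum_nonneg)

lemma cell_tail_average_integral_le:
  assumes "A \<subseteq> {0<..}" "finite A" "tame_grid e N" "t < N"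
  shows "integrable M (cell_tail_average A e t)"
    "(\<integral>x. cell_tail_average A e t x \<partial>M) \<le> 4 * coef_mass A {e t<..e (Suc t)}"
proof -
  show "integrable M (cell_tail_average A e t)"
    unfolding cell_tail_average_def[abs_def] using assms by auto
  have "(\<integral>x. cell_tail_average A e t x \<partial>M)
      = (1 / max 1 (real (e t))) * (\<Sum>n\<in>{e t<..e (Suc t)}. coef_mass A {n<..e (Suc t)})"
    unfolding cell_tail_average_def using assms
    by (simp add: Bochner_Integration.integral_sum Bochner_Integration.integrable_sum)
  also have "\<dots> \<le> 4 * coef_mass A {e t<..e (Suc t)}"
    by (intro tame_grid_average_le[OF assms(3,4)] coef_mass_mono_snd coef_mass_nonneg) auto
  finally show "(\<integral>x. cell_tail_average A e t x \<partial>M) \<le> 4 * coef_mass A {e t<..e (Suc t)}" .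
qed

lemma tail_majorant_integral_le:
  fixes L :: nat and e :: "nat \<Rightarrow> nat"
  assumes A: "A \<subseteq> {0<..}" "finite A" and e: "tame_grid e (2^L)"
  shows "integrable M (tail_majorant A e L)"
    "(\<integral>x. tail_majorant A e L x \<partial>M) \<le> 16 * (L+1)^2 * coef_mass A {e 0<..e (2^L)}"
proof -
  let ?\<gamma> = "coef_mass A {e 0<..e (2^L)}"
  note mono = tame_grid_mono[OF e]
  note cell = cell_tail_average_integral_le[OF A e]
  note rm = rm_majorant_col_sum_integral[OF A mono, of L]
  show "integrable M (tail_majorant A e L)"
    unfolding tail_majorant_def[abs_def] using A cell rm
    by (intro Bochner_Integration.integrable_add integrable_mult_right Bochner_Integration.integrable_sum) auto
  have "(\<Sum>t<2^L. (\<integral>x. cell_tail_average A e t x \<partial>M)) \<le> (\<Sum>t<(2::nat)^L. 4 * coef_mass A {e t<..e (Suc t)})"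
    using cell by (intro sum_mono) auto
  also have "\<dots> = 4 * ?\<gamma>"
    by (simp add: sum_distrib_left[symmetric] coef_mass_grid_snd[OF mono])
  finally have cells: "(\<Sum>t<2^L. (\<integral>x. cell_tail_average A e t x \<partial>M)) \<le> 4 * ?\<gamma>" .
  have "integrable M (\<lambda>x. (rect_sum A {e 0<..e (2^L)} x)\<^sup>2)"
    "integrable M (\<lambda>x. \<Sum>t<2^L. cell_tail_average A e t x)"
    using A cell by auto
  then have "(\<integral>x. tail_majorant A e L x \<partial>M)
      = 4 * (\<integral>x. (rect_sum A {e 0<..e (2^L)} x)\<^sup>2 \<partial>M)
        + 4 * (L+1) * (\<integral>x. rm_majorant e L (col_sum A x) \<partial>M)
        + 2 * (\<integral>x. (\<Sum>t<2^L. cell_tail_average A e t x) \<partial>M)"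
    unfolding tail_majorant_def using rm
    by (simp add: Bochner_Integration.integral_add Bochner_Integration.integrable_add)
  also have "\<dots> = 4 * ?\<gamma> + 4 * (L+1) * ((L+1) * ?\<gamma>)
        + 2 * (\<Sum>t<2^L. (\<integral>x. cell_tail_average A e t x \<partial>M))"
    using A cell rm by (simp add: Bochner_Integration.integral_sum)
  also have "\<dots> \<le> (12 + 4 * (L+1)^2) * ?\<gamma>"
    using cells by (simp add: algebra_simps power2_eq_square)
  also have "\<dots> \<le> 16 * (L+1)^2 * ?\<gamma>"
    by (intro mult_right_mono coef_mass_nonneg) (simp add: power2_eq_square)
  finally show "(\<integral>x. tail_majorant A e L x \<partial>M) \<le> 16 * (L+1)^2 * ?\<gamma>" .
qed

lemma sum_cell_tail_square_le:
  "(\<Sum>n\<in>{e t<..e (Suc t)} \<inter> {..Q}. (rect_sum A {n<..e (Suc t)} x)\<^sup>2) \<le> Q * cell_tail_average A e t x"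
  unfolding cell_tail_average_def by (rule sum_Ioc_inter_atMost_le_average) simp

text \<open>For \<open>n\<close> in the cell \<open>t\<close>, the tail \<open>(n, e (2\<^sup>L)]\<close> is the cell tail \<open>(n, e (t+1)]\<close> plus the
  difference of two initial segments, each controlled by the Rademacher--Menshov majorant.\<close>

lemma tail_square_le:
  fixes L :: nat and e :: "nat \<Rightarrow> nat"
  assumes "mono e" "t < 2^L" "n \<in> {e t<..e (Suc t)}"
  shows "(rect_sum A {n<..e (2^L)} x)\<^sup>2 \<le> 2 * (rect_sum A {n<..e (Suc t)} x)\<^sup>2
      + (4 * (rect_sum A {e 0<..e (2^L)} x)\<^sup>2 + 4 * (L+1) * rm_majorant e L (col_sum A x))"
proof -
  let ?S = "\<lambda>a b. rect_sum A {a<..b} x"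
  have le: "e (Suc t) \<le> e (2^L)" "e 0 \<le> e (Suc t)"
    using assms by (auto simp: mono_def)
  have "?S n (e (2^L)) = ?S n (e (Suc t)) + (?S (e 0) (e (2^L)) - ?S (e 0) (e (Suc t)))"
    using assms le rect_sum_split_snd[of n "e (Suc t)" "e (2^L)"]
      rect_sum_split_snd[of "e 0" "e (Suc t)" "e (2^L)"] by auto
  then have "(?S n (e (2^L)))\<^sup>2 \<le> 2 * (?S n (e (Suc t)))\<^sup>2 + 2 * (?S (e 0) (e (2^L)) - ?S (e 0) (e (Suc t)))\<^sup>2"
    using square_add_le by simp
  moreover have "(?S (e 0) (e (2^L)) - ?S (e 0) (e (Suc t)))\<^sup>2 \<le> 2 * (?S (e 0) (e (2^L)))\<^sup>2 + 2 * (?S (e 0) (e (Suc t)))\<^sup>2"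
    by (rule square_diff_le)
  moreover have "(?S (e 0) (e (Suc t)))\<^sup>2 \<le> (L+1) * rm_majorant e L (col_sum A x)"
    unfolding rect_sum_eq_sum_col_sum using rm_majorant_bound[OF assms(1), of "Suc t" L] assms(2)
    by (simp add: add.commute)
  ultimately show ?thesis by (simp only: mult.assoc)
qed

lemma sum_tail_square_le_tail_majorant:
  fixes L :: nat and e :: "nat \<Rightarrow> nat"
  assumes "mono e"
  shows "(\<Sum>n\<in>{e 0<..e (2^L)} \<inter> {..Q}. (rect_sum A {n<..e (2^L)} x)\<^sup>2) \<le> Q * tail_majorant A e L x"
proof -
  define K where "K = 4 * (rect_sum A {e 0<..e (2^L)} x)\<^sup>2 + 4 * (L+1) * rm_majorant e L (col_sum A x)"
  have "K \<ge> 0" unfolding K_def using rm_majorant_nonneg by auto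
  have "(\<Sum>n\<in>{e 0<..e (2^L)} \<inter> {..Q}. (rect_sum A {n<..e (2^L)} x)\<^sup>2)
      = (\<Sum>t<2^L. \<Sum>n\<in>{e t<..e (Suc t)} \<inter> {..Q}. (rect_sum A {n<..e (2^L)} x)\<^sup>2)"
    by (rule sum_Ioc_grid_atMost[OF assms])
  also have "\<dots> \<le> (\<Sum>t<2^L. \<Sum>n\<in>{e t<..e (Suc t)} \<inter> {..Q}. 2 * (rect_sum A {n<..e (Suc t)} x)\<^sup>2 + K)"
    unfolding K_def by (intro sum_mono tail_square_le[OF assms]) auto
  also have "\<dots> = 2 * (\<Sum>t<2^L. \<Sum>n\<in>{e t<..e (Suc t)} \<inter> {..Q}. (rect_sum A {n<..e (Suc t)} x)\<^sup>2)
      + (\<Sum>t<2^L. \<Sum>n\<in>{e t<..e (Suc t)} \<inter> {..Q}. K)"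
    by (simp add: sum.distrib sum_distrib_left)
  also have "\<dots> \<le> 2 * (\<Sum>t<2^L. Q * cell_tail_average A e t x) + Q * K"
    by (intro add_mono mult_left_mono sum_mono sum_cell_tail_square_le
        sum_grid_atMost_const_le assms \<open>K \<ge> 0\<close>) auto
  also have "\<dots> = Q * tail_majorant A e L x"
    unfolding tail_majorant_def K_def by (simp add: sum_distrib_left algebra_simps)
  finally show ?thesis .
qed

end

section \<open>Rectangle majorants\<close>

context orthonormal_double_series
begin

definition rm_majorant2 :: "(nat \<Rightarrow> nat) \<Rightarrow> nat \<Rightarrow> (nat \<Rightarrow> nat) \<Rightarrow> nat \<Rightarrow> 'a \<Rightarrow> real" where
  "rm_majorant2 e L e' L' x =
     (\<Sum>l\<le>L. \<Sum>u<2^(L-l). rm_majorant e' L' (col_sum {e (u*2^l)<..e (Suc u*2^l)} x))"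

definition fst_cell_rm_average :: "(nat \<Rightarrow> nat) \<Rightarrow> nat \<Rightarrow> (nat \<Rightarrow> nat) \<Rightarrow> nat \<Rightarrow> 'a \<Rightarrow> real" where
  "fst_cell_rm_average e t e' L' x =
     (1 / max 1 (real (e t))) * (\<Sum>m\<in>{e t<..e (Suc t)}. rm_majorant e' L' (col_sum {e t<..m} x))"

definition snd_cell_rm_average :: "(nat \<Rightarrow> nat) \<Rightarrow> nat \<Rightarrow> (nat \<Rightarrow> nat) \<Rightarrow> nat \<Rightarrow> 'a \<Rightarrow> real" where
  "snd_cell_rm_average e L e' s x =
     (1 / max 1 (real (e' s))) * (\<Sum>n\<in>{e' s<..e' (Suc s)}. rm_majorant e L (row_sum {e' s<..n} x))"

definition cell_square_average :: "(nat \<Rightarrow> nat) \<Rightarrow> nat \<Rightarrow> (nat \<Rightarrow> nat) \<Rightarrow> nat \<Rightarrow> 'a \<Rightarrow> real" where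
  "cell_square_average e t e' s x = (1 / max 1 (real (e t))) * (\<Sum>m\<in>{e t<..e (Suc t)}.
      (1 / max 1 (real (e' s))) * (\<Sum>n\<in>{e' s<..e' (Suc s)}. (rect_sum {e t<..m} {e' s<..n} x)\<^sup>2))"

text \<open>Majorant for the Cesaro means of the squared differences between the full grid rectangle sum
  and the partial rectangle sums.\<close>

definition rect_majorant :: "(nat \<Rightarrow> nat) \<Rightarrow> nat \<Rightarrow> (nat \<Rightarrow> nat) \<Rightarrow> nat \<Rightarrow> 'a \<Rightarrow> real" where
  "rect_majorant e L e' L' x = 5 * ((rect_sum {e 0<..e (2^L)} {e' 0<..e' (2^L')} x)\<^sup>2
     + (L+1) * (L'+1) * rm_majorant2 e L e' L' x
     + (L'+1) * (\<Sum>t<2^L. fst_cell_rm_average e t e' L' x)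
     + (L+1) * (\<Sum>s<2^L'. snd_cell_rm_average e L e' s x)
     + (\<Sum>t<2^L. \<Sum>s<2^L'. cell_square_average e t e' s x))"

lemma rm_majorant2_nonneg: "rm_majorant2 e L e' L' x \<ge> 0"
  unfolding rm_majorant2_def by (intro sum_nonneg rm_majorant_nonneg)

lemma fst_cell_rm_average_nonneg: "fst_cell_rm_average e t e' L' x \<ge> 0"
  unfolding fst_cell_rm_average_def by (intro mult_nonneg_nonneg sum_nonneg rm_majorant_nonneg) auto

lemma snd_cell_rm_average_nonneg: "snd_cell_rm_average e L e' s x \<ge> 0"
  unfolding snd_cell_rm_average_def by (intro mult_nonneg_nonneg sum_nonneg rm_majorant_nonneg) auto

lemma cell_square_average_nonneg: "cell_square_average e t e' s x \<ge> 0"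
  unfolding cell_square_average_def by (intro mult_nonneg_nonneg sum_nonneg) auto

lemma rect_majorant_nonneg: "rect_majorant e L e' L' x \<ge> 0"
  unfolding rect_majorant_def
  using rm_majorant2_nonneg fst_cell_rm_average_nonneg snd_cell_rm_average_nonneg cell_square_average_nonneg
  by (intro mult_nonneg_nonneg add_nonneg_nonneg sum_nonneg) auto

lemma rm_majorant2_integral:
  fixes L L' :: nat and e e' :: "nat \<Rightarrow> nat"
  assumes "mono e" "mono e'"
  shows "integrable M (rm_majorant2 e L e' L')"
    "(\<integral>x. rm_majorant2 e L e' L' x \<partial>M) = (L+1) * (L'+1) * coef_mass {e 0<..e (2^L)} {e' 0<..e' (2^L')}"
proof -
  note rm = rm_majorant_col_sum_integral[OF _ _ assms(2)]
  show "integrable M (rm_majorant2 e L e' L')"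
    unfolding rm_majorant2_def[abs_def] using rm by (auto intro!: Bochner_Integration.integrable_sum)
  have "(\<integral>x. rm_majorant2 e L e' L' x \<partial>M)
      = (\<Sum>l\<le>L. \<Sum>u<2^(L-l). (L'+1) * coef_mass {e (u*2^l)<..e (Suc u*2^l)} {e' 0<..e' (2^L')})"
    unfolding rm_majorant2_def using rm
    by (simp add: Bochner_Integration.integral_sum Bochner_Integration.integrable_sum)
  also have "\<dots> = (\<Sum>l\<le>L. (L'+1) * coef_mass {e 0<..e (2^L)} {e' 0<..e' (2^L')})"
    unfolding sum_distrib_left[symmetric] coef_mass_def
    by (intro sum.cong refl arg_cong2[where f=times] sum_dyadic_level assms) auto
  finally show "(\<integral>x. rm_majorant2 e L e' L' x \<partial>M)
      = (L+1) * (L'+1) * coef_mass {e 0<..e (2^L)} {e' 0<..e' (2^L')}"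
    by (simp add: algebra_simps)
qed

lemma fst_cell_rm_average_integrable:
  "mono e' \<Longrightarrow> integrable M (fst_cell_rm_average e t e' L')"
  unfolding fst_cell_rm_average_def[abs_def] using rm_majorant_col_sum_integral(1)
  by (auto intro!: Bochner_Integration.integrable_sum integrable_mult_right)

lemma fst_cell_rm_average_integral_le:
  fixes L' :: nat and e e' :: "nat \<Rightarrow> nat"
  assumes "tame_grid e N" "t < N" "mono e'"
  shows "(\<integral>x. fst_cell_rm_average e t e' L' x \<partial>M)
       \<le> 4 * ((L'+1) * coef_mass {e t<..e (Suc t)} {e' 0<..e' (2^L')})"
proof -
  note rm = rm_majorant_col_sum_integral[OF _ _ assms(3)]
  have "(\<integral>x. fst_cell_rm_average e t e' L' x \<partial>M)
      = (1 / max 1 (real (e t))) * (\<Sum>m\<in>{e t<..e (Suc t)}. (L'+1) * coef_mass {e t<..m} {e' 0<..e' (2^L')})"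
    unfolding fst_cell_rm_average_def using rm
    by (simp add: Bochner_Integration.integral_sum Bochner_Integration.integrable_sum)
  also have "\<dots> \<le> 4 * ((L'+1) * coef_mass {e t<..e (Suc t)} {e' 0<..e' (2^L')})"
    by (intro tame_grid_average_le[OF assms(1,2)] mult_left_mono coef_mass_mono_fst
        mult_nonneg_nonneg coef_mass_nonneg) auto
  finally show ?thesis .
qed

lemma snd_cell_rm_average_integrable:
  "mono e \<Longrightarrow> integrable M (snd_cell_rm_average e L e' s)"
  unfolding snd_cell_rm_average_def[abs_def] using rm_majorant_row_sum_integral(1)
  by (auto intro!: Bochner_Integration.integrable_sum integrable_mult_right)

lemma snd_cell_rm_average_integral_le:
  fixes L :: nat and e e' :: "nat \<Rightarrow> nat"
  assumes "mono e" "tame_grid e' N" "s < N"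
  shows "(\<integral>x. snd_cell_rm_average e L e' s x \<partial>M)
       \<le> 4 * ((L+1) * coef_mass {e 0<..e (2^L)} {e' s<..e' (Suc s)})"
proof -
  note rm = rm_majorant_row_sum_integral[OF assms(1)]
  have "(\<integral>x. snd_cell_rm_average e L e' s x \<partial>M)
      = (1 / max 1 (real (e' s))) * (\<Sum>n\<in>{e' s<..e' (Suc s)}. (L+1) * coef_mass {e 0<..e (2^L)} {e' s<..n})"
    unfolding snd_cell_rm_average_def using rm
    by (simp add: Bochner_Integration.integral_sum Bochner_Integration.integrable_sum)
  also have "\<dots> \<le> 4 * ((L+1) * coef_mass {e 0<..e (2^L)} {e' s<..e' (Suc s)})"
    by (intro tame_grid_average_le[OF assms(2,3)] mult_left_mono coef_mass_mono_snd
        mult_nonneg_nonneg coef_mass_nonneg) auto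
  finally show ?thesis .
qed

lemma cell_square_average_integrable: "integrable M (cell_square_average e t e' s)"
  unfolding cell_square_average_def[abs_def]
  by (auto intro!: Bochner_Integration.integrable_sum integrable_mult_right)

lemma cell_square_average_integral_le:
  assumes "tame_grid e N" "t < N" "tame_grid e' N'" "s < N'"
  shows "(\<integral>x. cell_square_average e t e' s x \<partial>M) \<le> 16 * coef_mass {e t<..e (Suc t)} {e' s<..e' (Suc s)}"
proof -
  have "(\<integral>x. cell_square_average e t e' s x \<partial>M) = (1 / max 1 (real (e t))) * (\<Sum>m\<in>{e t<..e (Suc t)}.
      (1 / max 1 (real (e' s))) * (\<Sum>n\<in>{e' s<..e' (Suc s)}. coef_mass {e t<..m} {e' s<..n}))"
    unfolding cell_square_average_def
    by (simp add: Bochner_Integration.integral_sum Bochner_Integration.integrable_sum)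
  also have "\<dots> \<le> 4 * (4 * coef_mass {e t<..e (Suc t)} {e' s<..e' (Suc s)})"
  proof (intro tame_grid_average_le[OF assms(1,2)] mult_nonneg_nonneg coef_mass_nonneg)
    fix m assume "m \<in> {e t<..e (Suc t)}"
    then show "(1 / max 1 (real (e' s))) * (\<Sum>n\<in>{e' s<..e' (Suc s)}. coef_mass {e t<..m} {e' s<..n})
        \<le> 4 * coef_mass {e t<..e (Suc t)} {e' s<..e' (Suc s)}"
      by (intro tame_grid_average_le[OF assms(3,4)] order_trans[OF coef_mass_mono_fst coef_mass_mono_snd]
          coef_mass_nonneg) auto
  qed auto
  finally show ?thesis by simp
qed

end

context orthonormal_double_series
begin

lemma sum_fst_cell_rm_average_integral_le:
  fixes L L' :: nat and e e' :: "nat \<Rightarrow> nat"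
  assumes e: "tame_grid e (2^L)" and "mono e'"
  shows "(\<Sum>t<2^L. (\<integral>x. fst_cell_rm_average e t e' L' x \<partial>M))
    \<le> 4 * (L'+1) * coef_mass {e 0<..e (2^L)} {e' 0<..e' (2^L')}"
proof -
  have "(\<Sum>t<2^L. (\<integral>x. fst_cell_rm_average e t e' L' x \<partial>M))
      \<le> (\<Sum>t<(2::nat)^L. 4 * ((L'+1) * coef_mass {e t<..e (Suc t)} {e' 0<..e' (2^L')}))"
    using fst_cell_rm_average_integral_le[OF e _ assms(2)] by (intro sum_mono) auto
  also have "\<dots> = 4 * (L'+1) * coef_mass {e 0<..e (2^L)} {e' 0<..e' (2^L')}"
    unfolding sum_distrib_left[symmetric] coef_mass_grid_fst[OF tame_grid_mono[OF e]] by simp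
  finally show ?thesis .
qed

lemma sum_snd_cell_rm_average_integral_le:
  fixes L L' :: nat and e e' :: "nat \<Rightarrow> nat"
  assumes "mono e" and e': "tame_grid e' (2^L')"
  shows "(\<Sum>s<2^L'. (\<integral>x. snd_cell_rm_average e L e' s x \<partial>M))
    \<le> 4 * (L+1) * coef_mass {e 0<..e (2^L)} {e' 0<..e' (2^L')}"
proof -
  have "(\<Sum>s<2^L'. (\<integral>x. snd_cell_rm_average e L e' s x \<partial>M))
      \<le> (\<Sum>s<(2::nat)^L'. 4 * ((L+1) * coef_mass {e 0<..e (2^L)} {e' s<..e' (Suc s)}))"
    using snd_cell_rm_average_integral_le[OF assms(1) e'] by (intro sum_mono) auto
  also have "\<dots> = 4 * (L+1) * coef_mass {e 0<..e (2^L)} {e' 0<..e' (2^L')}"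
    unfolding sum_distrib_left[symmetric] coef_mass_grid_snd[OF tame_grid_mono[OF e']] by simp
  finally show ?thesis .
qed

lemma sum_cell_square_average_integral_le:
  fixes L L' :: nat and e e' :: "nat \<Rightarrow> nat"
  assumes e: "tame_grid e (2^L)" and e': "tame_grid e' (2^L')"
  shows "(\<Sum>t<2^L. \<Sum>s<2^L'. (\<integral>x. cell_square_average e t e' s x \<partial>M))
    \<le> 16 * coef_mass {e 0<..e (2^L)} {e' 0<..e' (2^L')}"
proof -
  have "(\<Sum>t<2^L. \<Sum>s<2^L'. (\<integral>x. cell_square_average e t e' s x \<partial>M))
     \<le> (\<Sum>t<(2::nat)^L. \<Sum>s<(2::nat)^L'. 16 * coef_mass {e t<..e (Suc t)} {e' s<..e' (Suc s)})"
    using cell_square_average_integral_le[OF e _ e'] by (intro sum_mono) auto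
  also have "\<dots> = 16 * coef_mass {e 0<..e (2^L)} {e' 0<..e' (2^L')}"
    unfolding sum_distrib_left[symmetric] coef_mass_grid_snd[OF tame_grid_mono[OF e']]
      coef_mass_grid_fst[OF tame_grid_mono[OF e]] ..
  finally show ?thesis .
qed

lemma rect_majorant_integral_le:
  fixes L L' :: nat and e e' :: "nat \<Rightarrow> nat"
  assumes e: "tame_grid e (2^L)" and e': "tame_grid e' (2^L')"
  shows "integrable M (rect_majorant e L e' L')"
    "(\<integral>x. rect_majorant e L e' L' x \<partial>M)
       \<le> 130 * ((real L + 1)^2 * (real L' + 1)^2 * coef_mass {e 0<..e (2^L)} {e' 0<..e' (2^L')})"
proof -
  note mono = tame_grid_mono[OF e] tame_grid_mono[OF e']
  define G where "G = coef_mass {e 0<..e (2^L)} {e' 0<..e' (2^L')}"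
  note rm2 = rm_majorant2_integral[OF mono, of L L']
  note integrable = fst_cell_rm_average_integrable[OF mono(2)] snd_cell_rm_average_integrable[OF mono(1)]
    cell_square_average_integrable
  show "integrable M (rect_majorant e L e' L')"
    unfolding rect_majorant_def[abs_def] using rm2 integrable
    by (intro integrable_mult_right Bochner_Integration.integrable_add Bochner_Integration.integrable_sum) auto
  have "(\<integral>x. rect_majorant e L e' L' x \<partial>M) = 5 * (G + (L+1) * (L'+1) * ((L+1) * (L'+1) * G)
     + (L'+1) * (\<Sum>t<2^L. (\<integral>x. fst_cell_rm_average e t e' L' x \<partial>M))
     + (L+1) * (\<Sum>s<2^L'. (\<integral>x. snd_cell_rm_average e L e' s x \<partial>M))
     + (\<Sum>t<2^L. \<Sum>s<2^L'. (\<integral>x. cell_square_average e t e' s x \<partial>M)))"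
    unfolding rect_majorant_def using rm2 integrable
    by (simp add: Bochner_Integration.integral_sum Bochner_Integration.integrable_sum
          Bochner_Integration.integral_add Bochner_Integration.integrable_add G_def)
       (simp add: algebra_simps)
  also have "\<dots> \<le> 5 * (G + (L+1) * (L'+1) * ((L+1) * (L'+1) * G)
     + (L'+1) * (4 * (L'+1) * G) + (L+1) * (4 * (L+1) * G) + 16 * G)"
    using sum_fst_cell_rm_average_integral_le[OF e mono(2), of L'] sum_snd_cell_rm_average_integral_le[OF mono(1) e', of L]
      sum_cell_square_average_integral_le[OF e e'] unfolding G_def
    by (intro mult_left_mono add_mono order_refl) auto
  also have "\<dots> = 5 * (17 * G + (real L + 1)^2 * (real L' + 1)^2 * G + 4 * ((real L' + 1)^2 * G) + 4 * ((real L + 1)^2 * G))"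
    by (simp add: power2_eq_square algebra_simps)
  also have "\<dots> \<le> 130 * ((real L + 1)^2 * (real L' + 1)^2 * G)"
  proof -
    let ?X = "(real L + 1)^2 * (real L' + 1)^2"
    have G: "G \<ge> 0" unfolding G_def by (rule coef_mass_nonneg)
    have one: "1 \<le> (real L + 1)^2" "1 \<le> (real L' + 1)^2" by simp_all
    have lin: "a \<le> X \<Longrightarrow> b \<le> X \<Longrightarrow> 1 \<le> X \<Longrightarrow> 5 * (17 + X + 4 * b + 4 * a) \<le> 130 * X"
      for a b X :: real by (simp add: algebra_simps)
    have "(real L + 1)^2 \<le> ?X" "(real L' + 1)^2 \<le> ?X" "1 \<le> ?X"
      using mult_left_mono[OF one(2), of "(real L + 1)^2"] mult_right_mono[OF one(1), of "(real L' + 1)^2"]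
        mult_mono[OF one] by simp_all
    then have "5 * (17 + ?X + 4 * (real L' + 1)^2 + 4 * (real L + 1)^2) \<le> 130 * ?X"
      by (intro lin)
    from mult_right_mono[OF this G] show ?thesis
      by (simp add: algebra_simps)
  qed
  finally show "(\<integral>x. rect_majorant e L e' L' x \<partial>M)
       \<le> 130 * ((real L + 1)^2 * (real L' + 1)^2 * coef_mass {e 0<..e (2^L)} {e' 0<..e' (2^L')})"
    unfolding G_def .
qed

end

context orthonormal_double_series
begin

lemma grid_rect_square_le_rm_majorant2:
  fixes L L' :: nat and e e' :: "nat \<Rightarrow> nat"
  assumes "mono e" "mono e'" "t \<le> 2^L" "s \<le> 2^L'"
  shows "(rect_sum {e 0<..e t} {e' 0<..e' s} x)\<^sup>2 \<le> (L+1) * (L'+1) * rm_majorant2 e L e' L' x"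
proof -
  have row: "(rect_sum {e 0<..e t} {e' 0<..e' s} x)\<^sup>2 \<le> (L+1) * rm_majorant e L (row_sum {e' 0<..e' s} x)"
    unfolding rect_sum_eq_sum_row_sum using rm_majorant_bound[OF assms(1,3)] by (simp add: add.commute)
  have "rm_majorant e L (row_sum {e' 0<..e' s} x) \<le> (L'+1) * rm_majorant2 e L e' L' x"
  proof -
    have "rm_majorant e L (row_sum {e' 0<..e' s} x)
        = (\<Sum>l\<le>L. \<Sum>u<2^(L-l). (rect_sum {e (u*2^l)<..e (Suc u*2^l)} {e' 0<..e' s} x)\<^sup>2)"
      by (rule rm_majorant_row_sum)
    also have "\<dots> \<le> (\<Sum>l\<le>L. \<Sum>u<2^(L-l). (L'+1) * rm_majorant e' L' (col_sum {e (u*2^l)<..e (Suc u*2^l)} x))"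
      unfolding rect_sum_eq_sum_col_sum using rm_majorant_bound[OF assms(2,4)]
      by (intro sum_mono) (simp add: add.commute)
    also have "\<dots> = (L'+1) * rm_majorant2 e L e' L' x"
      unfolding rm_majorant2_def by (simp add: sum_distrib_left)
    finally show ?thesis .
  qed
  then have "(L+1) * rm_majorant e L (row_sum {e' 0<..e' s} x) \<le> (L+1) * ((L'+1) * rm_majorant2 e L e' L' x)"
    by (rule mult_left_mono) simp
  with row show ?thesis
    by (simp only: of_nat_mult mult.assoc)
qed

text \<open>For \<open>m\<close> in the cell \<open>t\<close> of \<open>e\<close> and \<open>n\<close> in the cell \<open>s\<close> of \<open>e'\<close>, the rectangle
  \<open>(e 0, m] \<times> (e' 0, n]\<close> splits into a grid rectangle, two strips that are grid intervals in one
  direction and partial cells in the other, and a corner inside a single pair of cells.\<close>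

lemma rect_diff_square_le:
  fixes L L' :: nat and e e' :: "nat \<Rightarrow> nat"
  assumes "mono e" "mono e'" "t < 2^L" "s < 2^L'"
    and m: "m \<in> {e t<..e (Suc t)}" and n: "n \<in> {e' s<..e' (Suc s)}"
  shows "(rect_sum {e 0<..e (2^L)} {e' 0<..e' (2^L')} x - rect_sum {e 0<..m} {e' 0<..n} x)\<^sup>2
    \<le> 5 * ((rect_sum {e 0<..e (2^L)} {e' 0<..e' (2^L')} x)\<^sup>2 + (L+1) * (L'+1) * rm_majorant2 e L e' L' x
        + (L'+1) * rm_majorant e' L' (col_sum {e t<..m} x) + (L+1) * rm_majorant e L (row_sum {e' s<..n} x)
        + (rect_sum {e t<..m} {e' s<..n} x)\<^sup>2)"
proof -
  have et: "e 0 \<le> e t" "e t \<le> m" and es: "e' 0 \<le> e' s" "e' s \<le> n"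
    using assms by (auto simp: mono_def)
  have "rect_sum {e 0<..m} {e' 0<..n} x = rect_sum {e 0<..e t} {e' 0<..e' s} x
      + rect_sum {e t<..m} {e' 0<..e' s} x + rect_sum {e 0<..e t} {e' s<..n} x + rect_sum {e t<..m} {e' s<..n} x"
    using rect_sum_split_fst[OF et, of "{e' 0<..n}" x] rect_sum_split_snd[OF es, of "{e 0<..e t}" x]
      rect_sum_split_snd[OF es, of "{e t<..m}" x] by simp
  moreover have "(rect_sum {e 0<..e t} {e' 0<..e' s} x)\<^sup>2 \<le> (L+1) * (L'+1) * rm_majorant2 e L e' L' x"
    using grid_rect_square_le_rm_majorant2[OF assms(1,2)] assms(3,4) by simp
  moreover have "(rect_sum {e t<..m} {e' 0<..e' s} x)\<^sup>2 \<le> (L'+1) * rm_majorant e' L' (col_sum {e t<..m} x)"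
    unfolding rect_sum_eq_sum_col_sum using rm_majorant_bound[OF assms(2), of s L'] assms(4)
    by (simp add: add.commute)
  moreover have "(rect_sum {e 0<..e t} {e' s<..n} x)\<^sup>2 \<le> (L+1) * rm_majorant e L (row_sum {e' s<..n} x)"
    unfolding rect_sum_eq_sum_row_sum using rm_majorant_bound[OF assms(1), of t L] assms(3)
    by (simp add: add.commute)
  ultimately show ?thesis
    using square_diff_add4_le by (smt (verit, best) mult_left_mono)
qed

end

context orthonormal_double_series
begin

lemma sum_rect_diff_square_snd_le:
  fixes L L' :: nat and e e' :: "nat \<Rightarrow> nat" and x :: 'a
  defines "F \<equiv> rect_sum {e 0<..e (2^L)} {e' 0<..e' (2^L')} x"
  assumes mono: "mono e" "mono e'" and t: "t < 2^L" and m: "m \<in> {e t<..e (Suc t)}"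
  shows "(\<Sum>n\<in>{e' 0<..e' (2^L')} \<inter> {..Q}. (F - rect_sum {e 0<..m} {e' 0<..n} x)\<^sup>2)
    \<le> 5 * Q * (F\<^sup>2 + (L+1) * (L'+1) * rm_majorant2 e L e' L' x + (L'+1) * rm_majorant e' L' (col_sum {e t<..m} x)
        + (L+1) * (\<Sum>s<2^L'. snd_cell_rm_average e L e' s x)
        + (\<Sum>s<2^L'. (1 / max 1 (real (e' s))) * (\<Sum>n\<in>{e' s<..e' (Suc s)}. (rect_sum {e t<..m} {e' s<..n} x)\<^sup>2)))"
proof -
  define C where "C = F\<^sup>2 + (L+1) * (L'+1) * rm_majorant2 e L e' L' x
    + (L'+1) * rm_majorant e' L' (col_sum {e t<..m} x)"
  define h where "h s n = (L+1) * rm_majorant e L (row_sum {e' s<..n} x) + (rect_sum {e t<..m} {e' s<..n} x)\<^sup>2"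
    for s n
  have "C \<ge> 0" unfolding C_def using rm_majorant_nonneg rm_majorant2_nonneg by auto
  have "(\<Sum>n\<in>{e' 0<..e' (2^L')} \<inter> {..Q}. (F - rect_sum {e 0<..m} {e' 0<..n} x)\<^sup>2)
      = (\<Sum>s<2^L'. \<Sum>n\<in>{e' s<..e' (Suc s)} \<inter> {..Q}. (F - rect_sum {e 0<..m} {e' 0<..n} x)\<^sup>2)"
    by (rule sum_Ioc_grid_atMost[OF mono(2)])
  also have "\<dots> \<le> (\<Sum>s<2^L'. \<Sum>n\<in>{e' s<..e' (Suc s)} \<inter> {..Q}. 5 * (C + h s n))"
  proof (intro sum_mono)
    fix s n assume "s \<in> {..<2^L'}" "n \<in> {e' s<..e' (Suc s)} \<inter> {..Q}"
    then show "(F - rect_sum {e 0<..m} {e' 0<..n} x)\<^sup>2 \<le> 5 * (C + h s n)"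
      using rect_diff_square_le[OF mono t, where s=s and L'=L' and m=m and n=n and x=x] m
      unfolding C_def h_def F_def by (simp add: algebra_simps)
  qed
  also have "\<dots> = 5 * (\<Sum>s<2^L'. \<Sum>n\<in>{e' s<..e' (Suc s)} \<inter> {..Q}. C + h s n)"
    by (simp add: sum_distrib_left)
  also have "\<dots> \<le> 5 * (Q * (C + (\<Sum>s<2^L'. (1 / max 1 (real (e' s))) * (\<Sum>n\<in>{e' s<..e' (Suc s)}. h s n))))"
    using \<open>C \<ge> 0\<close> rm_majorant_nonneg unfolding h_def
    by (intro mult_left_mono sum_grid_atMost_le_average mono add_nonneg_nonneg mult_nonneg_nonneg) auto
  also have "(\<Sum>s<2^L'. (1 / max 1 (real (e' s))) * (\<Sum>n\<in>{e' s<..e' (Suc s)}. h s n))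
      = (L+1) * (\<Sum>s<2^L'. snd_cell_rm_average e L e' s x)
        + (\<Sum>s<2^L'. (1 / max 1 (real (e' s))) * (\<Sum>n\<in>{e' s<..e' (Suc s)}. (rect_sum {e t<..m} {e' s<..n} x)\<^sup>2))"
    unfolding h_def snd_cell_rm_average_def scaled_sum_mult_add by (simp add: sum.distrib sum_distrib_left)
  finally show ?thesis unfolding C_def by (simp add: algebra_simps)
qed

lemma sum_rect_diff_square_le_rect_majorant:
  fixes L L' :: nat and e e' :: "nat \<Rightarrow> nat" and x :: 'a
  defines "F \<equiv> rect_sum {e 0<..e (2^L)} {e' 0<..e' (2^L')} x"
  assumes mono: "mono e" "mono e'"
  shows "(\<Sum>m\<in>{e 0<..e (2^L)} \<inter> {..P}. \<Sum>n\<in>{e' 0<..e' (2^L')} \<inter> {..Q}.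
           (F - rect_sum {e 0<..m} {e' 0<..n} x)\<^sup>2) \<le> P * Q * rect_majorant e L e' L' x"
proof -
  define C where "C = F\<^sup>2 + (L+1) * (L'+1) * rm_majorant2 e L e' L' x
    + (L+1) * (\<Sum>s<2^L'. snd_cell_rm_average e L e' s x)"
  define h where "h t m = (L'+1) * rm_majorant e' L' (col_sum {e t<..m} x)
    + (\<Sum>s<2^L'. (1 / max 1 (real (e' s))) * (\<Sum>n\<in>{e' s<..e' (Suc s)}. (rect_sum {e t<..m} {e' s<..n} x)\<^sup>2))"
    for t m
  have "C \<ge> 0"
    unfolding C_def using rm_majorant2_nonneg snd_cell_rm_average_nonneg
    by (intro add_nonneg_nonneg mult_nonneg_nonneg sum_nonneg) auto
  have inner: "(\<Sum>n\<in>{e' 0<..e' (2^L')} \<inter> {..Q}. (F - rect_sum {e 0<..m} {e' 0<..n} x)\<^sup>2) \<le> 5 * Q * (C + h t m)"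
    if "t < 2^L" "m \<in> {e t<..e (Suc t)}" for t m
    using sum_rect_diff_square_snd_le[OF mono that, where L'=L' and Q=Q and x=x] unfolding F_def C_def h_def
    by (simp add: algebra_simps)
  have "(\<Sum>m\<in>{e 0<..e (2^L)} \<inter> {..P}. \<Sum>n\<in>{e' 0<..e' (2^L')} \<inter> {..Q}. (F - rect_sum {e 0<..m} {e' 0<..n} x)\<^sup>2)
      = (\<Sum>t<2^L. \<Sum>m\<in>{e t<..e (Suc t)} \<inter> {..P}. \<Sum>n\<in>{e' 0<..e' (2^L')} \<inter> {..Q}.
          (F - rect_sum {e 0<..m} {e' 0<..n} x)\<^sup>2)"
    by (rule sum_Ioc_grid_atMost[OF mono(1)])
  also have "\<dots> \<le> (\<Sum>t<2^L. \<Sum>m\<in>{e t<..e (Suc t)} \<inter> {..P}. 5 * Q * (C + h t m))"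
    by (intro sum_mono inner) auto
  also have "\<dots> = 5 * Q * (\<Sum>t<2^L. \<Sum>m\<in>{e t<..e (Suc t)} \<inter> {..P}. C + h t m)"
    by (simp add: sum_distrib_left)
  also have "\<dots> \<le> 5 * Q * (P * (C + (\<Sum>t<2^L. (1 / max 1 (real (e t))) * (\<Sum>m\<in>{e t<..e (Suc t)}. h t m))))"
    using \<open>C \<ge> 0\<close> rm_majorant_nonneg unfolding h_def
    by (intro mult_left_mono sum_grid_atMost_le_average mono add_nonneg_nonneg mult_nonneg_nonneg sum_nonneg)
      auto
  also have "(\<Sum>t<2^L. (1 / max 1 (real (e t))) * (\<Sum>m\<in>{e t<..e (Suc t)}. h t m))
      = (L'+1) * (\<Sum>t<2^L. fst_cell_rm_average e t e' L' x) + (\<Sum>t<2^L. \<Sum>s<2^L'. cell_square_average e t e' s x)"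
    unfolding h_def fst_cell_rm_average_def cell_square_average_def scaled_sum_mult_add
    by (simp add: sum.distrib sum_distrib_left sum.swap[of _ "{..<2^L'}"])
  also have "5 * Q * (P * (C + ((L'+1) * (\<Sum>t<2^L. fst_cell_rm_average e t e' L' x)
      + (\<Sum>t<2^L. \<Sum>s<2^L'. cell_square_average e t e' s x)))) = P * Q * rect_majorant e L e' L' x"
    unfolding rect_majorant_def C_def F_def by (simp add: algebra_simps)
  finally show ?thesis by simp
qed

end

section \<open>Blocks of indices\<close>

text \<open>The blocks \<open>(2^2^i, 2^2^(i+1)]\<close> are the index ranges on which \<open>log log j \<approx> i\<close>; \<open>block_grid i\<close>
  cuts the block \<open>i\<close> into the \<open>2^i\<close> dyadic cells \<open>(2^(2^i+t), 2^(2^i+t+1)]\<close>, and the first block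
  \<open>(0, 4]\<close> into unit cells.\<close>

definition block_end :: "nat \<Rightarrow> nat" where
  "block_end i = (if i = 0 then 0 else 2^(2^i))"

definition block_grid :: "nat \<Rightarrow> nat \<Rightarrow> nat" where
  "block_grid i t = (if i = 0 then 4*t else 2^(2^i + t))"

definition block_index :: "nat \<Rightarrow> nat" where
  "block_index j = (LEAST i. j \<le> block_end (Suc i))"

definition loglog_weight :: "nat \<Rightarrow> real" where
  "loglog_weight j = log 2 (log 2 (real j + 3))"

lemma block_end_0 [simp]: "block_end 0 = 0"
  unfolding block_end_def by simp

lemma block_grid_0: "block_grid i 0 = block_end i"
  unfolding block_grid_def block_end_def by simp

lemma block_grid_top: "block_grid i (2^i) = block_end (Suc i)"
  unfolding block_grid_def block_end_def by (simp add: mult_2)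

lemma tame_grid_block_grid: "tame_grid (block_grid i) (2^i)"
  unfolding tame_grid_def
proof (intro conjI allI impI)
  show "mono (block_grid i)"
    unfolding block_grid_def mono_def by (auto intro: power_increasing)
  show "block_grid i (Suc t) - block_grid i t \<le> 4 * max 1 (block_grid i t)" for t
    unfolding block_grid_def by auto
qed

lemma strict_mono_block_end: "strict_mono block_end"
  by (rule strict_monoI_Suc) (auto simp: block_end_def intro: power_strict_increasing)

lemma mono_block_end: "mono block_end"
  using strict_mono_block_end strict_mono_mono by blast

lemma le_block_end_Suc: "i \<le> block_end (Suc i)"
proof -
  have "Suc i < 2^(Suc i)" "2^(Suc i) < (2::nat)^(2^(Suc i))" by (rule less_exp)+
  then show ?thesis unfolding block_end_def by (simp only: Nat.nat.distinct if_False)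
qed

lemma le_block_end_block_index: "j \<le> block_end (Suc (block_index j))"
  unfolding block_index_def by (rule LeastI[of _ j]) (rule le_block_end_Suc)

lemma block_end_block_index_less: "j \<ge> 1 \<Longrightarrow> block_end (block_index j) < j"
proof (cases "block_index j")
  case (Suc i)
  then have "\<not> j \<le> block_end (Suc i)"
    using not_less_Least[of i "\<lambda>i. j \<le> block_end (Suc i)"] unfolding block_index_def by simp
  then show ?thesis using Suc by simp
qed simp

lemma mem_block_index: "j \<ge> 1 \<Longrightarrow> j \<in> {block_end (block_index j)<..block_end (Suc (block_index j))}"
  using le_block_end_block_index block_end_block_index_less by auto

lemma le_block_index: "block_end i < j \<Longrightarrow> i \<le> block_index j"
proof (rule ccontr)
  assume "block_end i < j" "\<not> i \<le> block_index j"
  then have "block_end (Suc (block_index j)) \<le> block_end i"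
    using mono_block_end by (auto simp: mono_def)
  then show False using le_block_end_block_index[of j] \<open>block_end i < j\<close> by simp
qed

lemma block_index_eq:
  assumes "j \<in> {block_end i<..block_end (Suc i)}"
  shows "block_index j = i"
proof -
  have "i \<le> block_index j" using assms by (intro le_block_index) auto
  moreover have "block_index j \<le> i"
  proof (rule ccontr)
    assume "\<not> block_index j \<le> i"
    then have "block_end (Suc i) \<le> block_end (block_index j)"
      using mono_block_end by (auto simp: mono_def)
    then show False using block_end_block_index_less[of j] assms by auto
  qed
  ultimately show ?thesis by simp
qed

lemma block_index_mono: "j \<le> j' \<Longrightarrow> block_index j \<le> block_index j'"
  unfolding block_index_def by (meson Least_le LeastI_ex le_trans le_block_end_Suc)

lemma filterlim_block_index: "filterlim block_index at_top sequentially"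
  unfolding filterlim_at_top
proof
  show "eventually (\<lambda>j. i \<le> block_index j) sequentially" for i
    by (rule eventually_mono[OF eventually_gt_at_top[of "block_end i"]]) (rule le_block_index)
qed

lemma atLeastAtMost_eq_blocks: "{block_end 0<..block_end (Suc (block_index Q))} \<inter> {..Q} = {1..Q}"
  using le_block_end_block_index[of Q] by auto

lemma sum_atLeastAtMost_by_blocks:
  fixes h :: "nat \<Rightarrow> nat \<Rightarrow> real"
  shows "(\<Sum>n\<in>{1..Q}. h (block_index n) n)
    = (\<Sum>l<Suc (block_index Q). \<Sum>n\<in>{block_end l<..block_end (Suc l)} \<inter> {..Q}. h l n)"
proof -
  have "(\<Sum>n\<in>{1..Q}. h (block_index n) n)
      = (\<Sum>l<Suc (block_index Q). \<Sum>n\<in>{block_end l<..block_end (Suc l)} \<inter> {..Q}. h (block_index n) n)"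
    unfolding atLeastAtMost_eq_blocks[symmetric] by (rule sum_Ioc_grid_atMost[OF mono_block_end])
  also have "\<dots> = (\<Sum>l<Suc (block_index Q). \<Sum>n\<in>{block_end l<..block_end (Suc l)} \<inter> {..Q}. h l n)"
    by (intro sum.cong refl) (auto simp: block_index_eq)
  finally show ?thesis .
qed

lemma loglog_weight_ge_1: "j \<ge> 1 \<Longrightarrow> loglog_weight j \<ge> 1"
proof -
  assume "j \<ge> 1"
  then have "log 2 (2^2) \<le> log 2 (real j + 3)" by (subst log_le_cancel_iff) auto
  moreover have "log 2 ((2::real)^2) = 2" using log_pow_cancel[of "2::real" 2] by simp
  ultimately have "2 \<le> log 2 (real j + 3)" by linarith
  then have "log 2 2 \<le> log 2 (log 2 (real j + 3))" by (subst log_le_cancel_iff) auto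
  then show ?thesis unfolding loglog_weight_def by simp
qed

lemma block_index_square_le_loglog_weight:
  assumes "j \<in> {block_end i<..block_end (Suc i)}"
  shows "(real i + 1)^2 \<le> 4 * (loglog_weight j)^2"
proof -
  have w: "loglog_weight j \<ge> 1" using assms by (intro loglog_weight_ge_1) auto
  have "real i + 1 \<le> 2 * loglog_weight j"
  proof (cases "i = 0")
    case False
    then have "2^(2^i) < j" using assms by (simp add: block_end_def)
    then have "(2::real)^(2^i) < real j + 3"
      by (metis of_nat_less_iff of_nat_numeral of_nat_power less_add_same_cancel1 less_trans
          zero_less_numeral of_nat_add)
    then have "real (2^i) < log 2 (real j + 3)" by (intro less_log_of_power) auto
    then have "real i < loglog_weight j"
      unfolding loglog_weight_def by (intro less_log_of_power) auto
    then show ?thesis using w by simp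
  qed (use w in simp)
  then have "(real i + 1)^2 \<le> (2 * loglog_weight j)^2" by (intro power_mono) auto
  then show ?thesis by (simp add: power_mult_distrib)
qed

lemma sum_block_coef_weighted_le:
  fixes c :: "nat \<Rightarrow> nat \<Rightarrow> real"
  assumes coef: "(\<lambda>(j, k). (c j k)\<^sup>2 * (log 2 (log 2 (real j + 3)))\<^sup>2 * (log 2 (log 2 (real k + 3)))\<^sup>2)
                 summable_on ({1..} \<times> {1..})"
  shows "(\<Sum>i<I. \<Sum>l<L. (real i + 1)^2 * (real l + 1)^2 *
          (\<Sum>j\<in>{block_end i<..block_end (Suc i)}. \<Sum>k\<in>{block_end l<..block_end (Suc l)}. (c j k)\<^sup>2))
     \<le> 16 * (\<Sum>\<^sub>\<infinity>(j, k)\<in>{1..} \<times> {1..}.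
          (c j k)\<^sup>2 * (log 2 (log 2 (real j + 3)))\<^sup>2 * (log 2 (log 2 (real k + 3)))\<^sup>2)"
proof -
  define g where "g j k = (c j k)\<^sup>2 * (loglog_weight j)\<^sup>2 * (loglog_weight k)\<^sup>2" for j k
  let ?B = "\<lambda>i. {block_end i<..block_end (Suc i)}"
  have "(\<Sum>i<I. \<Sum>l<L. (real i + 1)^2 * (real l + 1)^2 * (\<Sum>j\<in>?B i. \<Sum>k\<in>?B l. (c j k)\<^sup>2))
     = (\<Sum>i<I. \<Sum>l<L. \<Sum>j\<in>?B i. \<Sum>k\<in>?B l. (real i + 1)^2 * (real l + 1)^2 * (c j k)\<^sup>2)"
    by (simp add: sum_distrib_left)
  also have "\<dots> \<le> (\<Sum>i<I. \<Sum>l<L. \<Sum>j\<in>?B i. \<Sum>k\<in>?B l. 16 * g j k)"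
  proof (intro sum_mono)
    fix i l j k assume j: "j \<in> ?B i" and k: "k \<in> ?B l"
    have "(real i + 1)^2 * (real l + 1)^2 \<le> (4 * (loglog_weight j)\<^sup>2) * (4 * (loglog_weight k)\<^sup>2)"
      using block_index_square_le_loglog_weight[OF j] block_index_square_le_loglog_weight[OF k]
      by (intro mult_mono) auto
    then have "(real i + 1)^2 * (real l + 1)^2 * (c j k)\<^sup>2
        \<le> (4 * (loglog_weight j)\<^sup>2) * (4 * (loglog_weight k)\<^sup>2) * (c j k)\<^sup>2"
      by (intro mult_right_mono) auto
    then show "(real i + 1)^2 * (real l + 1)^2 * (c j k)\<^sup>2 \<le> 16 * g j k"
      unfolding g_def by (simp add: algebra_simps)
  qed
  also have "\<dots> = 16 * (\<Sum>i<I. \<Sum>j\<in>?B i. \<Sum>l<L. \<Sum>k\<in>?B l. g j k)"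
    by (simp add: sum_distrib_left sum.swap[of _ "{..<L}"])
  also have "(\<Sum>i<I. \<Sum>j\<in>?B i. \<Sum>l<L. \<Sum>k\<in>?B l. g j k)
      = (\<Sum>j\<in>{block_end 0<..block_end I}. \<Sum>k\<in>{block_end 0<..block_end L}. g j k)"
    by (simp only: sum_Ioc_grid[OF mono_block_end])
  also have "\<dots> = (\<Sum>(j, k)\<in>{block_end 0<..block_end I} \<times> {block_end 0<..block_end L}. g j k)"
    by (rule sum.cartesian_product)
  also have "\<dots> \<le> (\<Sum>\<^sub>\<infinity>(j, k)\<in>{1..} \<times> {1..}. g j k)"
    using coef unfolding g_def loglog_weight_def
    by (intro finite_sum_le_infsum) (auto simp: case_prod_beta)
  finally show ?thesis unfolding g_def loglog_weight_def by simp
qed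

section \<open>Block majorants\<close>

definition block_fraction :: "nat \<Rightarrow> nat \<Rightarrow> real" where
  "block_fraction l Q = min 1 (real (block_end (Suc l)) / real Q)"

lemma block_fraction_nonneg: "block_fraction l Q \<ge> 0"
  unfolding block_fraction_def by auto

lemma block_fraction_le_1: "block_fraction l Q \<le> 1"
  unfolding block_fraction_def by auto

lemma mult_block_fraction: "real Q * block_fraction l Q = min (real Q) (real (block_end (Suc l)))"
  unfolding block_fraction_def by (cases "Q = 0") (auto simp: min_def field_simps)

lemma tendsto_block_fraction: "(block_fraction l \<longlongrightarrow> 0) sequentially"
proof -
  have "((\<lambda>Q. real (block_end (Suc l)) / real Q) \<longlongrightarrow> 0) sequentially"
    by (intro tendsto_divide_0[OF tendsto_const] filterlim_at_top_imp_at_infinity[OF filterlim_real_sequentially])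
  then have "((\<lambda>Q. min 1 (real (block_end (Suc l)) / real Q)) \<longlongrightarrow> min 1 0) sequentially"
    by (intro tendsto_min tendsto_const)
  then show ?thesis unfolding block_fraction_def[abs_def] by simp
qed

lemma tendsto_suminf_block_fraction:
  fixes b :: "nat \<Rightarrow> real"
  assumes "\<And>l. b l \<ge> 0" "summable b"
  shows "((\<lambda>Q. \<Sum>l. block_fraction l Q * b l) \<longlongrightarrow> 0) sequentially"
proof -
  have "((\<lambda>Q. \<Sum>l. block_fraction l Q * b l) \<longlongrightarrow> (\<Sum>l. 0 * b l)) sequentially"
  proof (rule tannerys_theorem[THEN conjunct2, THEN conjunct2])
    show "((\<lambda>Q. block_fraction l Q * b l) \<longlongrightarrow> 0 * b l) sequentially" for l
      by (intro tendsto_mult tendsto_block_fraction tendsto_const)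
    show "\<forall>\<^sub>F (l, Q) in at_top \<times>\<^sub>F sequentially. norm (block_fraction l Q * b l) \<le> b l"
      using block_fraction_nonneg block_fraction_le_1 assms(1)
      by (intro always_eventually) (auto intro!: mult_left_le_one_le)
  qed (use assms in auto)
  then show ?thesis by simp
qed

text \<open>A partial sum over the part of the block \<open>l\<close> below \<open>Q\<close> stops growing once \<open>Q\<close> passes the block.\<close>

lemma block_partial_sum_le:
  fixes f :: "nat \<Rightarrow> real"
  assumes "\<And>Q. f Q \<le> Q * C" "\<And>Q. Q \<ge> block_end (Suc l) \<Longrightarrow> f Q = f (block_end (Suc l))" "C \<ge> 0"
  shows "f Q \<le> Q * block_fraction l Q * C"
  using assms(1)[of Q] assms(1)[of "block_end (Suc l)"] assms(2)[of Q] assms(3)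
  unfolding mult_block_fraction by (cases "Q \<le> block_end (Suc l)") (auto simp: min_def)

context orthonormal_double_series
begin

text \<open>Row majorants are the column majorants of the transposed system.\<close>

interpretation transposed: orthonormal_double_series M "\<lambda>j k. \<psi> k j" "\<lambda>j k. c k j"
proof (rule orthonormal_double_series.intro[OF finite])
  show "orthonormal_system2 M (\<lambda>j k. \<psi> k j)"
    unfolding orthonormal_system2_def using psi_measurable psi_square_integrable psi_inner by auto
qed

lemma transposed_rect_sum: "transposed.rect_sum A B x = rect_sum B A x"
  unfolding transposed.rect_sum_def rect_sum_def by (rule sum.swap)

lemma transposed_coef_mass: "transposed.coef_mass A B = coef_mass B A"
  unfolding transposed.coef_mass_def coef_mass_def by (rule sum.swap)

abbreviation block :: "nat \<Rightarrow> nat set" where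
  "block i \<equiv> {block_end i<..block_end (Suc i)}"

definition block_rect_sum :: "nat \<Rightarrow> nat \<Rightarrow> 'a \<Rightarrow> real" where
  "block_rect_sum i l x = rect_sum (block i) (block l) x"

definition block_col_majorant :: "nat \<Rightarrow> nat \<Rightarrow> 'a \<Rightarrow> real" where
  "block_col_majorant i l x = tail_majorant (block i) (block_grid l) l x"

definition block_row_majorant :: "nat \<Rightarrow> nat \<Rightarrow> 'a \<Rightarrow> real" where
  "block_row_majorant i l x = transposed.tail_majorant (block l) (block_grid i) i x"

definition block_rect_majorant :: "nat \<Rightarrow> nat \<Rightarrow> 'a \<Rightarrow> real" where
  "block_rect_majorant i l x = rect_majorant (block_grid i) i (block_grid l) l x"

definition block_majorant :: "nat \<Rightarrow> nat \<Rightarrow> 'a \<Rightarrow> real" where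
  "block_majorant i l x = \<bar>block_rect_sum i l x\<bar> + (real i + 1)^2 * block_col_majorant i l x
     + (real l + 1)^2 * block_row_majorant i l x + block_rect_majorant i l x"

lemma block_majorants_nonneg:
  "block_col_majorant i l x \<ge> 0" "block_row_majorant i l x \<ge> 0" "block_rect_majorant i l x \<ge> 0"
  "block_majorant i l x \<ge> 0"
proof -
  show "block_col_majorant i l x \<ge> 0" "block_row_majorant i l x \<ge> 0" "block_rect_majorant i l x \<ge> 0"
    unfolding block_col_majorant_def block_row_majorant_def block_rect_majorant_def
    by (rule tail_majorant_nonneg transposed.tail_majorant_nonneg rect_majorant_nonneg)+
  then show "block_majorant i l x \<ge> 0"
    unfolding block_majorant_def by (intro add_nonneg_nonneg mult_nonneg_nonneg) auto
qed

lemma sum_block_col_tail_square_le: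
  "(\<Sum>n\<in>block l \<inter> {..Q}. (rect_sum (block i) {n<..block_end (Suc l)} x)\<^sup>2)
     \<le> Q * block_fraction l Q * block_col_majorant i l x"
proof (rule block_partial_sum_le[where f="\<lambda>Q. \<Sum>n\<in>block l \<inter> {..Q}. (rect_sum (block i) {n<..block_end (Suc l)} x)\<^sup>2"])
  show "(\<Sum>n\<in>block l \<inter> {..Q}. (rect_sum (block i) {n<..block_end (Suc l)} x)\<^sup>2) \<le> Q * block_col_majorant i l x" for Q
    using sum_tail_square_le_tail_majorant[OF tame_grid_mono[OF tame_grid_block_grid[of l]], where A="block i" and L=l and Q=Q and x=x]
    unfolding block_col_majorant_def block_grid_0 block_grid_top .
qed (auto intro!: sum.cong simp: block_majorants_nonneg)

lemma sum_block_row_tail_square_le: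
  "(\<Sum>m\<in>block i \<inter> {..P}. (rect_sum {m<..block_end (Suc i)} (block l) x)\<^sup>2)
     \<le> P * block_fraction i P * block_row_majorant i l x"
proof (rule block_partial_sum_le[where f="\<lambda>P. \<Sum>m\<in>block i \<inter> {..P}. (rect_sum {m<..block_end (Suc i)} (block l) x)\<^sup>2"])
  show "(\<Sum>m\<in>block i \<inter> {..P}. (rect_sum {m<..block_end (Suc i)} (block l) x)\<^sup>2) \<le> P * block_row_majorant i l x" for P
    using transposed.sum_tail_square_le_tail_majorant[OF tame_grid_mono[OF tame_grid_block_grid[of i]], where A="block l" and L=i and Q=P and x=x]
    unfolding block_row_majorant_def block_grid_0 block_grid_top transposed_rect_sum .
qed (auto intro!: sum.cong simp: block_majorants_nonneg)

lemma sum_block_rect_diff_square_le: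
  "(\<Sum>m\<in>block i \<inter> {..P}. \<Sum>n\<in>block l \<inter> {..Q}.
      (block_rect_sum i l x - rect_sum {block_end i<..m} {block_end l<..n} x)\<^sup>2)
     \<le> Q * block_fraction l Q * (P * block_rect_majorant i l x)"
proof (rule block_partial_sum_le[where f="\<lambda>Q. \<Sum>m\<in>block i \<inter> {..P}. \<Sum>n\<in>block l \<inter> {..Q}.
      (block_rect_sum i l x - rect_sum {block_end i<..m} {block_end l<..n} x)\<^sup>2"])
  show "(\<Sum>m\<in>block i \<inter> {..P}. \<Sum>n\<in>block l \<inter> {..Q}.
      (block_rect_sum i l x - rect_sum {block_end i<..m} {block_end l<..n} x)\<^sup>2) \<le> Q * (P * block_rect_majorant i l x)" for Q
    using sum_rect_diff_square_le_rect_majorant[OF tame_grid_mono[OF tame_grid_block_grid[of i]]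
        tame_grid_mono[OF tame_grid_block_grid[of l]], where L=i and L'=l and x=x and P=P and Q=Q]
    unfolding block_rect_majorant_def block_rect_sum_def block_grid_0 block_grid_top by (simp add: mult_ac)
qed (auto intro!: sum.cong simp: block_majorants_nonneg)

lemma block_majorant_integral_le:
  shows "integrable M (block_majorant i l)"
    "(\<integral>x. block_majorant i l x \<partial>M) \<le> measure M (space M) / ((real i + 1)^2 * (real l + 1)^2)
        + 163 * ((real i + 1)^2 * (real l + 1)^2 * coef_mass (block i) (block l))"
proof -
  interpret finite_measure M by (rule finite)
  define w where "w = (real i + 1)^2 * (real l + 1)^2"
  define \<gamma> where "\<gamma> = coef_mass (block i) (block l)"
  have "w > 0" unfolding w_def by simp
  have "\<gamma> \<ge> 0" unfolding \<gamma>_def by (rule coef_mass_nonneg)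
  have "block_rect_sum i l \<in> borel_measurable M" "integrable M (\<lambda>x. (block_rect_sum i l x)\<^sup>2)"
    "(\<integral>x. (block_rect_sum i l x)\<^sup>2 \<partial>M) = \<gamma>"
    unfolding block_rect_sum_def[abs_def] \<gamma>_def by (simp_all add: rect_sum_measurable)
  note iA = integral_abs_le_inverse_plus_square(1)[OF this(1,2) \<open>w > 0\<close>]
    and IA = integral_abs_le_inverse_plus_square(2)[OF this(1,2) \<open>w > 0\<close>, unfolded this(3)]
  have iX: "integrable M (block_col_majorant i l)"
    and IX: "(\<integral>x. block_col_majorant i l x \<partial>M) \<le> 16 * (real l + 1)^2 * \<gamma>"
    using tail_majorant_integral_le[OF _ _ tame_grid_block_grid, of "block i" l]
    unfolding block_col_majorant_def[abs_def] \<gamma>_def block_grid_0 block_grid_top by (auto simp: add.commute)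
  have iY: "integrable M (block_row_majorant i l)"
    and IY: "(\<integral>x. block_row_majorant i l x \<partial>M) \<le> 16 * (real i + 1)^2 * \<gamma>"
    using transposed.tail_majorant_integral_le[OF _ _ tame_grid_block_grid, of "block l" i]
    unfolding block_row_majorant_def[abs_def] \<gamma>_def block_grid_0 block_grid_top transposed_coef_mass
    by (auto simp: add.commute)
  have iZ: "integrable M (block_rect_majorant i l)" and IZ: "(\<integral>x. block_rect_majorant i l x \<partial>M) \<le> 130 * (w * \<gamma>)"
    using rect_majorant_integral_le[OF tame_grid_block_grid tame_grid_block_grid, of i l]
    unfolding block_rect_majorant_def[abs_def] \<gamma>_def w_def block_grid_0 block_grid_top by (auto simp: mult.assoc)
  show "integrable M (block_majorant i l)"
    unfolding block_majorant_def[abs_def] using iA iX iY iZ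
    by (intro Bochner_Integration.integrable_add integrable_mult_right) auto
  have "(\<integral>x. block_majorant i l x \<partial>M) = (\<integral>x. \<bar>block_rect_sum i l x\<bar> \<partial>M)
      + (real i + 1)^2 * (\<integral>x. block_col_majorant i l x \<partial>M)
      + (real l + 1)^2 * (\<integral>x. block_row_majorant i l x \<partial>M) + (\<integral>x. block_rect_majorant i l x \<partial>M)"
    unfolding block_majorant_def using iA iX iY iZ
    by (simp add: Bochner_Integration.integral_add Bochner_Integration.integrable_add)
  also have "\<dots> \<le> (measure M (space M) / (2 * w) + w * \<gamma> / 2) + (real i + 1)^2 * (16 * (real l + 1)^2 * \<gamma>)
      + (real l + 1)^2 * (16 * (real i + 1)^2 * \<gamma>) + 130 * (w * \<gamma>)"
    by (intro add_mono IA IX IY IZ mult_left_mono) auto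
  also have "\<dots> = measure M (space M) / (2 * w) + 325/2 * (w * \<gamma>)"
    unfolding w_def by (simp add: algebra_simps)
  also have "\<dots> \<le> measure M (space M) / w + 163 * (w * \<gamma>)"
    using \<open>w > 0\<close> \<open>\<gamma> \<ge> 0\<close> by (intro add_mono frac_le mult_right_mono) auto
  finally show "(\<integral>x. block_majorant i l x \<partial>M) \<le> measure M (space M) / ((real i + 1)^2 * (real l + 1)^2)
        + 163 * ((real i + 1)^2 * (real l + 1)^2 * coef_mass (block i) (block l))"
    unfolding w_def \<gamma>_def .
qed

end

context orthonormal_double_series
begin

lemma sum_block_majorant_integral_le:
  assumes coef: "(\<lambda>(j, k). (c j k)\<^sup>2 * (log 2 (log 2 (real j + 3)))\<^sup>2 * (log 2 (log 2 (real k + 3)))\<^sup>2)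
                 summable_on ({1..} \<times> {1..})"
  shows "(\<Sum>i<I. \<Sum>l<L. \<integral>x. block_majorant i l x \<partial>M)
    \<le> 4 * measure M (space M) + 163 * (16 * (\<Sum>\<^sub>\<infinity>(j, k)\<in>{1..} \<times> {1..}.
          (c j k)\<^sup>2 * (log 2 (log 2 (real j + 3)))\<^sup>2 * (log 2 (log 2 (real k + 3)))\<^sup>2))"
proof -
  have "(\<Sum>i<I. \<Sum>l<L. \<integral>x. block_majorant i l x \<partial>M)
      \<le> (\<Sum>i<I. \<Sum>l<L. measure M (space M) / ((real i + 1)^2 * (real l + 1)^2)
        + 163 * ((real i + 1)^2 * (real l + 1)^2 * coef_mass (block i) (block l)))"
    by (intro sum_mono block_majorant_integral_le)
  also have "\<dots> = measure M (space M) * (\<Sum>i<I. \<Sum>l<L. 1 / ((real i + 1)^2 * (real l + 1)^2))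
      + 163 * (\<Sum>i<I. \<Sum>l<L. (real i + 1)^2 * (real l + 1)^2 * coef_mass (block i) (block l))"
    by (simp add: sum.distrib sum_distrib_left)
  also have "\<dots> \<le> measure M (space M) * 4 + 163 * (16 * (\<Sum>\<^sub>\<infinity>(j, k)\<in>{1..} \<times> {1..}.
          (c j k)\<^sup>2 * (log 2 (log 2 (real j + 3)))\<^sup>2 * (log 2 (log 2 (real k + 3)))\<^sup>2))"
    unfolding coef_mass_def
    by (intro add_mono mult_left_mono double_sum_inverse_squares_le sum_block_coef_weighted_le coef) auto
  finally show ?thesis by simp
qed

lemma AE_block_majorant_summable:
  assumes coef: "(\<lambda>(j, k). (c j k)\<^sup>2 * (log 2 (log 2 (real j + 3)))\<^sup>2 * (log 2 (log 2 (real k + 3)))\<^sup>2)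
                 summable_on ({1..} \<times> {1..})"
  shows "AE x in M. (\<Sum>i. \<Sum>l. ennreal (block_majorant i l x)) \<noteq> top
    \<and> (\<Sum>l. \<Sum>i. ennreal (block_majorant i l x)) \<noteq> top"
proof -
  note bound = sum_block_majorant_integral_le[OF coef]
  have "AE x in M. (\<Sum>i. \<Sum>l. ennreal (block_majorant i l x)) \<noteq> top"
    using block_majorant_integral_le(1) block_majorants_nonneg(4) bound
    by (rule AE_double_suminf_finite)
  moreover have "AE x in M. (\<Sum>l. \<Sum>i. ennreal (block_majorant i l x)) \<noteq> top"
    using block_majorant_integral_le(1) block_majorants_nonneg(4)
    by (rule AE_double_suminf_finite) (use bound in \<open>subst sum.swap, blast\<close>)
  ultimately show ?thesis by eventually_elim auto
qed

end

section \<open>Cesaro means at a point\<close>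

lemma sum_block_fraction_le_suminf:
  fixes b :: "nat \<Rightarrow> nat \<Rightarrow> real"
  assumes b: "\<And>i l. b i l \<ge> 0" and summable: "\<And>l. summable (\<lambda>i. b i l)" "summable (\<lambda>l. \<Sum>i. b i l)"
  shows "(\<Sum>l<J. block_fraction l Q * (\<Sum>i<I. b i l)) \<le> (\<Sum>l. block_fraction l Q * (\<Sum>i. b i l))"
proof -
  have "(\<Sum>l<J. block_fraction l Q * (\<Sum>i<I. b i l)) \<le> (\<Sum>l<J. block_fraction l Q * (\<Sum>i. b i l))"
    using b by (intro sum_mono mult_left_mono sum_le_suminf summable block_fraction_nonneg) auto
  also have "\<dots> \<le> (\<Sum>l. block_fraction l Q * (\<Sum>i. b i l))"
  proof (rule sum_le_suminf)
    show "summable (\<lambda>l. block_fraction l Q * (\<Sum>i. b i l))"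
    proof (rule summable_comparison_test'[OF summable(2)])
      show "norm (block_fraction l Q * (\<Sum>i. b i l)) \<le> (\<Sum>i. b i l)" for l
        using b block_fraction_nonneg block_fraction_le_1 suminf_nonneg[OF summable(1)]
        by (auto intro!: mult_left_le_one_le)
    qed
  qed (use b block_fraction_nonneg in \<open>auto intro!: mult_nonneg_nonneg suminf_nonneg summable\<close>)
  finally show ?thesis .
qed

lemma sum_block_weighted_le:
  fixes V :: "nat \<Rightarrow> nat \<Rightarrow> nat \<Rightarrow> real" and B :: "nat \<Rightarrow> nat \<Rightarrow> real"
  assumes V: "\<And>i l n. V i l n \<ge> 0" and B: "\<And>i l. B i l \<ge> 0"
    and block: "\<And>i l Q. (\<Sum>n\<in>{block_end l<..block_end (Suc l)} \<inter> {..Q}. V i l n) \<le> Q * block_fraction l Q * B i l"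
    and summable: "\<And>l. summable (\<lambda>i. (real i + 1)^2 * B i l)" "summable (\<lambda>l. \<Sum>i. (real i + 1)^2 * B i l)"
  shows "(\<Sum>m\<in>{1..P}. \<Sum>n\<in>{1..Q}. \<Sum>i<block_index m. (real i + 1)^2 * V i (block_index n) n)
     \<le> P * Q * (\<Sum>l. block_fraction l Q * (\<Sum>i. (real i + 1)^2 * B i l))"
proof -
  define I where "I = Suc (block_index P)"
  define J where "J = Suc (block_index Q)"
  have "(\<Sum>m\<in>{1..P}. \<Sum>n\<in>{1..Q}. \<Sum>i<block_index m. (real i + 1)^2 * V i (block_index n) n)
      \<le> (\<Sum>m\<in>{1..P}. \<Sum>n\<in>{1..Q}. \<Sum>i<I. (real i + 1)^2 * V i (block_index n) n)"
    using V unfolding I_def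
    by (intro sum_mono sum_mono2) (auto dest!: block_index_mono[of _ P] intro!: mult_nonneg_nonneg)
  also have "\<dots> = P * (\<Sum>n\<in>{1..Q}. \<Sum>i<I. (real i + 1)^2 * V i (block_index n) n)"
    by simp
  also have "(\<Sum>n\<in>{1..Q}. \<Sum>i<I. (real i + 1)^2 * V i (block_index n) n)
      \<le> Q * (\<Sum>l. block_fraction l Q * (\<Sum>i. (real i + 1)^2 * B i l))"
  proof -
    have "(\<Sum>n\<in>{1..Q}. \<Sum>i<I. (real i + 1)^2 * V i (block_index n) n)
        = (\<Sum>i<I. (real i + 1)^2 * (\<Sum>n\<in>{1..Q}. V i (block_index n) n))"
      by (subst sum.swap) (simp add: sum_distrib_left)
    also have "\<dots> = (\<Sum>i<I. (real i + 1)^2 * (\<Sum>l<J. \<Sum>n\<in>{block_end l<..block_end (Suc l)} \<inter> {..Q}. V i l n))"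
      unfolding J_def by (subst sum_atLeastAtMost_by_blocks) (rule refl)
    also have "\<dots> \<le> (\<Sum>i<I. (real i + 1)^2 * (\<Sum>l<J. Q * block_fraction l Q * B i l))"
      by (intro sum_mono mult_left_mono block) auto
    also have "\<dots> = Q * (\<Sum>l<J. block_fraction l Q * (\<Sum>i<I. (real i + 1)^2 * B i l))"
      by (simp add: sum_distrib_left sum.swap[of _ "{..<J}"] mult_ac)
    also have "\<dots> \<le> Q * (\<Sum>l. block_fraction l Q * (\<Sum>i. (real i + 1)^2 * B i l))"
      using B by (intro mult_left_mono sum_block_fraction_le_suminf summable) auto
    finally show ?thesis .
  qed
  finally show ?thesis by (simp add: mult_left_mono mult.assoc)
qed

lemma sum_block_pair_le:
  fixes W :: "nat \<Rightarrow> nat \<Rightarrow> nat \<Rightarrow> nat \<Rightarrow> real" and B :: "nat \<Rightarrow> nat \<Rightarrow> real"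
  assumes B: "\<And>i l. B i l \<ge> 0"
    and block: "\<And>i l P Q. (\<Sum>m\<in>{block_end i<..block_end (Suc i)} \<inter> {..P}. \<Sum>n\<in>{block_end l<..block_end (Suc l)} \<inter> {..Q}.
        W i l m n) \<le> Q * block_fraction l Q * (P * B i l)"
    and summable: "\<And>l. summable (\<lambda>i. B i l)" "summable (\<lambda>l. \<Sum>i. B i l)"
  shows "(\<Sum>m\<in>{1..P}. \<Sum>n\<in>{1..Q}. W (block_index m) (block_index n) m n)
     \<le> P * Q * (\<Sum>l. block_fraction l Q * (\<Sum>i. B i l))"
proof -
  define I where "I = Suc (block_index P)"
  define J where "J = Suc (block_index Q)"
  have "(\<Sum>m\<in>{1..P}. \<Sum>n\<in>{1..Q}. W (block_index m) (block_index n) m n)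
      = (\<Sum>i<I. \<Sum>l<J. \<Sum>m\<in>{block_end i<..block_end (Suc i)} \<inter> {..P}.
          \<Sum>n\<in>{block_end l<..block_end (Suc l)} \<inter> {..Q}. W i l m n)"
  proof -
    have "(\<Sum>m\<in>{1..P}. \<Sum>n\<in>{1..Q}. W (block_index m) (block_index n) m n)
        = (\<Sum>i<I. \<Sum>m\<in>{block_end i<..block_end (Suc i)} \<inter> {..P}. \<Sum>n\<in>{1..Q}. W i (block_index n) m n)"
      unfolding I_def by (rule sum_atLeastAtMost_by_blocks)
    also have "\<dots> = (\<Sum>i<I. \<Sum>m\<in>{block_end i<..block_end (Suc i)} \<inter> {..P}.
        \<Sum>l<J. \<Sum>n\<in>{block_end l<..block_end (Suc l)} \<inter> {..Q}. W i l m n)"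
      unfolding J_def by (subst sum_atLeastAtMost_by_blocks) (rule refl)
    finally show ?thesis by (simp only: sum.swap[of _ "{..<J}"])
  qed
  also have "\<dots> \<le> (\<Sum>i<I. \<Sum>l<J. Q * block_fraction l Q * (P * B i l))"
    by (intro sum_mono block)
  also have "\<dots> = P * Q * (\<Sum>l<J. block_fraction l Q * (\<Sum>i<I. B i l))"
    by (simp add: sum_distrib_left sum.swap[of _ "{..<J}"] mult_ac)
  also have "\<dots> \<le> P * Q * (\<Sum>l. block_fraction l Q * (\<Sum>i. B i l))"
    using B by (intro mult_left_mono sum_block_fraction_le_suminf summable) auto
  finally show ?thesis by simp
qed

context orthonormal_double_series
begin

lemma rect_sum_blocks_fst: "rect_sum {0<..block_end i} B x = (\<Sum>i'<i. rect_sum (block i') B x)"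
  using sum_Ioc_grid[OF mono_block_end, of "row_sum B x" i] unfolding rect_sum_eq_sum_row_sum by simp

lemma rect_sum_blocks_snd: "rect_sum A {0<..block_end l} x = (\<Sum>l'<l. rect_sum A (block l') x)"
  using sum_Ioc_grid[OF mono_block_end, of "col_sum A x" l] unfolding rect_sum_eq_sum_col_sum by simp

lemma rect_sum_block_square:
  "rect_sum {0<..block_end a} {0<..block_end b} x = (\<Sum>i<a. \<Sum>l<b. block_rect_sum i l x)"
  unfolding rect_sum_blocks_fst by (simp add: rect_sum_blocks_snd block_rect_sum_def)

text \<open>For \<open>m\<close> in the block \<open>i\<close> and \<open>n\<close> in the block \<open>l\<close>, the rectangle up to the block corner
  \<open>(block_end (i+1), block_end (l+1))\<close> exceeds \<open>(0,m] \<times> (0,n]\<close> by a column strip over the earlier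
  row blocks, a row strip over the earlier column blocks, and the rest of the block pair \<open>(i, l)\<close>.\<close>

lemma rect_sum_block_corner_diff:
  assumes m: "m \<in> block i" and n: "n \<in> block l"
  shows "rect_sum {0<..block_end (Suc i)} {0<..block_end (Suc l)} x - rect_sum {0<..m} {0<..n} x
    = (\<Sum>i'<i. rect_sum (block i') {n<..block_end (Suc l)} x)
    + (\<Sum>l'<l. rect_sum {m<..block_end (Suc i)} (block l') x)
    + (block_rect_sum i l x - rect_sum {block_end i<..m} {block_end l<..n} x)"
proof -
  let ?a = "block_end i" and ?a' = "block_end (Suc i)" and ?b = "block_end l" and ?b' = "block_end (Suc l)"
  let ?S = "\<lambda>A B. rect_sum A B x"
  have ma: "?a \<le> m" "m \<le> ?a'" and nb: "?b \<le> n" "n \<le> ?b'" using m n by auto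
  have "?S {0<..?a'} {0<..?b'} = ?S {0<..?a} {0<..n} + ?S {0<..?a} {n<..?b'}
      + ?S {?a<..?a'} {0<..?b} + ?S {?a<..?a'} {?b<..?b'}"
    using ma nb rect_sum_split_fst[of 0 ?a ?a'] rect_sum_split_snd[of 0 n ?b']
      rect_sum_split_snd[of 0 ?b ?b'] by simp
  moreover have "?S {0<..m} {0<..n} = ?S {0<..?a} {0<..n} + ?S {?a<..m} {0<..?b} + ?S {?a<..m} {?b<..n}"
    using ma nb rect_sum_split_fst[of 0 ?a m] rect_sum_split_snd[of 0 ?b n] by simp
  moreover have "?S {?a<..?a'} {0<..?b} = ?S {?a<..m} {0<..?b} + ?S {m<..?a'} {0<..?b}"
    using ma by (rule rect_sum_split_fst)
  ultimately show ?thesis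
    unfolding rect_sum_blocks_fst rect_sum_blocks_snd block_rect_sum_def by simp
qed

context
  fixes x :: 'a
  assumes finite_rows: "(\<Sum>i. \<Sum>l. ennreal (block_majorant i l x)) \<noteq> top"
    and finite_cols: "(\<Sum>l. \<Sum>i. ennreal (block_majorant i l x)) \<noteq> top"
begin

lemma summable_block_rect_sum:
  "summable (\<lambda>l. \<bar>block_rect_sum i l x\<bar>)" "summable (\<lambda>i. \<Sum>l. \<bar>block_rect_sum i l x\<bar>)"
  using summable_double_if_ennreal_dominated[OF _ _ finite_rows, of "\<lambda>i l. \<bar>block_rect_sum i l x\<bar>"]
    block_majorants_nonneg unfolding block_majorant_def by auto

lemma summable_block_row_majorant:
  "summable (\<lambda>l. (real l + 1)^2 * block_row_majorant i l x)"
  "summable (\<lambda>i. \<Sum>l. (real l + 1)^2 * block_row_majorant i l x)"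
  using summable_double_if_ennreal_dominated[OF _ _ finite_rows, of "\<lambda>i l. (real l + 1)^2 * block_row_majorant i l x"]
    block_majorants_nonneg unfolding block_majorant_def by auto

lemma summable_block_col_majorant:
  "summable (\<lambda>i. (real i + 1)^2 * block_col_majorant i l x)"
  "summable (\<lambda>l. \<Sum>i. (real i + 1)^2 * block_col_majorant i l x)"
  using summable_double_if_ennreal_dominated[OF _ _ finite_cols, of "\<lambda>l i. (real i + 1)^2 * block_col_majorant i l x"]
    block_majorants_nonneg unfolding block_majorant_def by auto

lemma summable_block_rect_majorant:
  "summable (\<lambda>i. block_rect_majorant i l x)" "summable (\<lambda>l. \<Sum>i. block_rect_majorant i l x)"
  using summable_double_if_ennreal_dominated[OF _ _ finite_cols, of "\<lambda>l i. block_rect_majorant i l x"]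
    block_majorants_nonneg unfolding block_majorant_def by auto

definition row_tail :: "nat \<Rightarrow> real" where
  "row_tail a = (\<Sum>k. \<Sum>l. \<bar>block_rect_sum (k + a) l x\<bar>)"

definition col_tail :: "nat \<Rightarrow> real" where
  "col_tail b = (\<Sum>i. \<Sum>k. \<bar>block_rect_sum i (k + b) x\<bar>)"

lemma tendsto_row_tail: "(row_tail \<longlongrightarrow> 0) sequentially"
  unfolding row_tail_def by (rule suminf_exist_split2[OF summable_block_rect_sum(2)])

lemma tendsto_col_tail: "(col_tail \<longlongrightarrow> 0) sequentially"
  unfolding col_tail_def by (rule tendsto_column_tails[OF summable_block_rect_sum])

lemma rect_sum_block_square_error_le:
  "\<bar>rect_sum {0<..block_end a} {0<..block_end b} x - (\<Sum>i. \<Sum>l. block_rect_sum i l x)\<bar>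
    \<le> row_tail a + col_tail b"
  unfolding rect_sum_block_square row_tail_def col_tail_def
  by (rule double_suminf_rect_error_le[OF summable_block_rect_sum])

lemma tendsto_rect_sum_block_diagonal:
  "((\<lambda>a. rect_sum {0<..block_end a} {0<..block_end a} x) \<longlongrightarrow> (\<Sum>i. \<Sum>l. block_rect_sum i l x)) sequentially"
proof -
  have "((\<lambda>a. rect_sum {0<..block_end a} {0<..block_end a} x - (\<Sum>i. \<Sum>l. block_rect_sum i l x)) \<longlongrightarrow> 0) sequentially"
    by (rule Lim_null_comparison[OF _ tendsto_add[OF tendsto_row_tail tendsto_col_tail, simplified]])
      (use rect_sum_block_square_error_le in \<open>auto intro: always_eventually\<close>)
  then show ?thesis by (rule LIM_zero_cancel)
qed

lemma partial_sum_error_square_le: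
  assumes "m \<ge> 1" "n \<ge> 1"
  shows "(rect_sum {1..m} {1..n} x - (\<Sum>i. \<Sum>l. block_rect_sum i l x))\<^sup>2 \<le>
     12 * (\<Sum>i<block_index m. (real i + 1)^2 * (rect_sum (block i) {n<..block_end (Suc (block_index n))} x)\<^sup>2)
   + 12 * (\<Sum>l<block_index n. (real l + 1)^2 * (rect_sum {m<..block_end (Suc (block_index m))} (block l) x)\<^sup>2)
   + 6 * (block_rect_sum (block_index m) (block_index n) x
          - rect_sum {block_end (block_index m)<..m} {block_end (block_index n)<..n} x)\<^sup>2
   + (4 * (row_tail (Suc (block_index m)))\<^sup>2 + 4 * (col_tail (Suc (block_index n)))\<^sup>2)"
proof -
  define i where "i = block_index m"
  define l where "l = block_index n"
  define X where "X = (\<Sum>i'<i. rect_sum (block i') {n<..block_end (Suc l)} x)"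
  define Y where "Y = (\<Sum>l'<l. rect_sum {m<..block_end (Suc i)} (block l') x)"
  define Z where "Z = block_rect_sum i l x - rect_sum {block_end i<..m} {block_end l<..n} x"
  define H where "H = rect_sum {0<..block_end (Suc i)} {0<..block_end (Suc l)} x - (\<Sum>i. \<Sum>l. block_rect_sum i l x)"
  have "{1..m} = {0<..m}" "{1..n} = {0<..n}" by auto
  then have "rect_sum {1..m} {1..n} x - (\<Sum>i. \<Sum>l. block_rect_sum i l x) = H - (X + Y + Z)"
    using rect_sum_block_corner_diff[OF mem_block_index mem_block_index, of m n x] assms
    unfolding H_def X_def Y_def Z_def i_def l_def by simp
  then have s: "(rect_sum {1..m} {1..n} x - (\<Sum>i. \<Sum>l. block_rect_sum i l x))\<^sup>2 \<le> 2 * H\<^sup>2 + 2 * (X + Y + Z)\<^sup>2"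
    using square_diff_le by simp
  have h: "H\<^sup>2 \<le> 2 * (row_tail (Suc i))\<^sup>2 + 2 * (col_tail (Suc l))\<^sup>2"
  proof -
    have "\<bar>H\<bar> \<le> row_tail (Suc i) + col_tail (Suc l)"
      unfolding H_def by (rule rect_sum_block_square_error_le)
    then have "H\<^sup>2 \<le> (row_tail (Suc i) + col_tail (Suc l))\<^sup>2"
      by (metis abs_ge_zero power2_abs power_mono)
    then show ?thesis using square_add_le[of "row_tail (Suc i)" "col_tail (Suc l)"] by linarith
  qed
  have combine: "\<lbrakk>r \<le> 2 * h + 2 * d; d \<le> 3 * (p + q + z); h \<le> 2 * a + 2 * b; p \<le> 2 * u; q \<le> 2 * v\<rbrakk>
      \<Longrightarrow> r \<le> 12 * u + 12 * v + 6 * z + (4 * a + 4 * b)" for r h d p q z a b u v :: real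
    unfolding distrib_left by linarith
  have "X\<^sup>2 \<le> 2 * (\<Sum>i'<i. (real i' + 1)^2 * (rect_sum (block i') {n<..block_end (Suc l)} x)\<^sup>2)"
    unfolding X_def by (rule square_sum_le_weighted)
  moreover have "Y\<^sup>2 \<le> 2 * (\<Sum>l'<l. (real l' + 1)^2 * (rect_sum {m<..block_end (Suc i)} (block l') x)\<^sup>2)"
    unfolding Y_def by (rule square_sum_le_weighted)
  ultimately show ?thesis
    unfolding i_def[symmetric] l_def[symmetric] Z_def[symmetric] by (rule combine[OF s square_add3_le h])
qed

definition row_error_bound :: "nat \<Rightarrow> real" where
  "row_error_bound P = 12 * (\<Sum>i. block_fraction i P * (\<Sum>l. (real l + 1)^2 * block_row_majorant i l x))
     + 4 * ((1 / real P) * (\<Sum>m\<in>{1..P}. (row_tail (Suc (block_index m)))\<^sup>2))"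

definition col_error_bound :: "nat \<Rightarrow> real" where
  "col_error_bound Q = 12 * (\<Sum>l. block_fraction l Q * (\<Sum>i. (real i + 1)^2 * block_col_majorant i l x))
     + 6 * (\<Sum>l. block_fraction l Q * (\<Sum>i. block_rect_majorant i l x))
     + 4 * ((1 / real Q) * (\<Sum>n\<in>{1..Q}. (col_tail (Suc (block_index n)))\<^sup>2))"

lemma tendsto_cesaro_tail_square:
  assumes "(t \<longlongrightarrow> 0) sequentially"
  shows "((\<lambda>P. (1 / real P) * (\<Sum>m\<in>{1..P}. (t (Suc (block_index m)))\<^sup>2)) \<longlongrightarrow> 0) sequentially"
proof (rule cesaro_mean_tendsto_zero)
  have index: "filterlim (\<lambda>m. Suc (block_index m)) at_top sequentially"
    by (rule filterlim_compose[OF filterlim_Suc filterlim_block_index])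
  show "((\<lambda>m. (t (Suc (block_index m)))\<^sup>2) \<longlongrightarrow> 0) sequentially"
    using tendsto_power[OF filterlim_compose[OF assms index], of 2] by simp
qed simp

lemma tendsto_row_error_bound: "(row_error_bound \<longlongrightarrow> 0) sequentially"
proof -
  have "((\<lambda>P. \<Sum>i. block_fraction i P * (\<Sum>l. (real l + 1)^2 * block_row_majorant i l x)) \<longlongrightarrow> 0) sequentially"
    using block_majorants_nonneg summable_block_row_majorant
    by (intro tendsto_suminf_block_fraction suminf_nonneg) auto
  from tendsto_add[OF tendsto_mult_right_zero[OF this]
      tendsto_mult_right_zero[OF tendsto_cesaro_tail_square[OF tendsto_row_tail]]]
  show ?thesis unfolding row_error_bound_def[abs_def] by simp
qed

lemma tendsto_col_error_bound: "(col_error_bound \<longlongrightarrow> 0) sequentially"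
proof -
  have "((\<lambda>Q. \<Sum>l. block_fraction l Q * (\<Sum>i. (real i + 1)^2 * block_col_majorant i l x)) \<longlongrightarrow> 0) sequentially"
    using block_majorants_nonneg summable_block_col_majorant
    by (intro tendsto_suminf_block_fraction suminf_nonneg) auto
  moreover have "((\<lambda>Q. \<Sum>l. block_fraction l Q * (\<Sum>i. block_rect_majorant i l x)) \<longlongrightarrow> 0) sequentially"
    using block_majorants_nonneg summable_block_rect_majorant
    by (intro tendsto_suminf_block_fraction suminf_nonneg) auto
  ultimately show ?thesis
    using tendsto_add[OF tendsto_add[OF tendsto_mult_right_zero tendsto_mult_right_zero]
        tendsto_mult_right_zero[OF tendsto_cesaro_tail_square[OF tendsto_col_tail]]]
    unfolding col_error_bound_def[abs_def] by simp
qed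

lemma cesaro_error_le:
  assumes "P \<ge> 1" "Q \<ge> 1"
  shows "(1 / (real P * real Q)) * (\<Sum>m=1..P. \<Sum>n=1..Q. \<bar>rect_sum {1..m} {1..n} x - (\<Sum>i. \<Sum>l. block_rect_sum i l x)\<bar>\<^sup>2)
    \<le> row_error_bound P + col_error_bound Q"
proof -
  define bX where "bX = (\<Sum>l. block_fraction l Q * (\<Sum>i. (real i + 1)^2 * block_col_majorant i l x))"
  define bY where "bY = (\<Sum>i. block_fraction i P * (\<Sum>l. (real l + 1)^2 * block_row_majorant i l x))"
  define bZ where "bZ = (\<Sum>l. block_fraction l Q * (\<Sum>i. block_rect_majorant i l x))"
  define XX where "XX = (\<Sum>m\<in>{1..P}. \<Sum>n\<in>{1..Q}. \<Sum>i<block_index m.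
    (real i + 1)^2 * (rect_sum (block i) {n<..block_end (Suc (block_index n))} x)\<^sup>2)"
  define YY where "YY = (\<Sum>m\<in>{1..P}. \<Sum>n\<in>{1..Q}. \<Sum>l<block_index n.
    (real l + 1)^2 * (rect_sum {m<..block_end (Suc (block_index m))} (block l) x)\<^sup>2)"
  define ZZ where "ZZ = (\<Sum>m\<in>{1..P}. \<Sum>n\<in>{1..Q}. (block_rect_sum (block_index m) (block_index n) x
    - rect_sum {block_end (block_index m)<..m} {block_end (block_index n)<..n} x)\<^sup>2)"
  define HH where "HH = (\<Sum>m\<in>{1..P}. \<Sum>n\<in>{1..Q}.
    4 * (row_tail (Suc (block_index m)))\<^sup>2 + 4 * (col_tail (Suc (block_index n)))\<^sup>2)"
  have "(\<Sum>m=1..P. \<Sum>n=1..Q. \<bar>rect_sum {1..m} {1..n} x - (\<Sum>i. \<Sum>l. block_rect_sum i l x)\<bar>\<^sup>2)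
      \<le> (\<Sum>m\<in>{1..P}. \<Sum>n\<in>{1..Q}.
         12 * (\<Sum>i<block_index m. (real i + 1)^2 * (rect_sum (block i) {n<..block_end (Suc (block_index n))} x)\<^sup>2)
       + 12 * (\<Sum>l<block_index n. (real l + 1)^2 * (rect_sum {m<..block_end (Suc (block_index m))} (block l) x)\<^sup>2)
       + 6 * (block_rect_sum (block_index m) (block_index n) x
          - rect_sum {block_end (block_index m)<..m} {block_end (block_index n)<..n} x)\<^sup>2
       + (4 * (row_tail (Suc (block_index m)))\<^sup>2 + 4 * (col_tail (Suc (block_index n)))\<^sup>2))"
    unfolding power2_abs by (intro sum_mono partial_sum_error_square_le) auto
  also have "\<dots> = 12 * XX + 12 * YY + 6 * ZZ + HH"
    unfolding XX_def YY_def ZZ_def HH_def by (simp add: sum.distrib sum_distrib_left)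
  finally have "(\<Sum>m=1..P. \<Sum>n=1..Q. \<bar>rect_sum {1..m} {1..n} x - (\<Sum>i. \<Sum>l. block_rect_sum i l x)\<bar>\<^sup>2)
      \<le> 12 * XX + 12 * YY + 6 * ZZ + HH" .
  moreover have "XX \<le> real P * real Q * bX"
    unfolding XX_def bX_def using block_majorants_nonneg
    by (intro sum_block_weighted_le sum_block_col_tail_square_le summable_block_col_majorant) auto
  moreover have "YY \<le> real P * real Q * bY"
    using sum_block_weighted_le[where V="\<lambda>l i m. (rect_sum {m<..block_end (Suc i)} (block l) x)\<^sup>2"
        and B="\<lambda>l i. block_row_majorant i l x" and P=Q and Q=P]
    unfolding YY_def bY_def sum.swap[of _ "{1..P}"] using block_majorants_nonneg
      sum_block_row_tail_square_le summable_block_row_majorant by (simp add: mult.commute)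
  moreover have "ZZ \<le> real P * real Q * bZ"
    unfolding ZZ_def bZ_def using block_majorants_nonneg
    by (intro sum_block_pair_le sum_block_rect_diff_square_le summable_block_rect_majorant) auto
  moreover have "HH = 4 * real Q * (\<Sum>m\<in>{1..P}. (row_tail (Suc (block_index m)))\<^sup>2)
      + 4 * real P * (\<Sum>n\<in>{1..Q}. (col_tail (Suc (block_index n)))\<^sup>2)"
    unfolding HH_def by (simp add: sum.distrib sum_distrib_left sum.swap[of _ "{1..P}"] mult_ac)
  ultimately have "(\<Sum>m=1..P. \<Sum>n=1..Q. \<bar>rect_sum {1..m} {1..n} x - (\<Sum>i. \<Sum>l. block_rect_sum i l x)\<bar>\<^sup>2)
      \<le> 12 * (real P * real Q * bX) + 12 * (real P * real Q * bY) + 6 * (real P * real Q * bZ)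
        + (4 * real Q * (\<Sum>m\<in>{1..P}. (row_tail (Suc (block_index m)))\<^sup>2)
        + 4 * real P * (\<Sum>n\<in>{1..Q}. (col_tail (Suc (block_index n)))\<^sup>2))"
    by linarith
  also have "\<dots> = real P * real Q * (row_error_bound P + col_error_bound Q)"
    using assms unfolding row_error_bound_def col_error_bound_def bX_def bY_def bZ_def
    by (simp add: field_simps)
  finally show ?thesis
    using assms by (simp add: field_simps)
qed

theorem cesaro_error_tendsto_zero:
  "((\<lambda>(P, Q). (1 / (real P * real Q)) *
      (\<Sum>m=1..P. \<Sum>n=1..Q. \<bar>rect_sum {1..m} {1..n} x - (\<Sum>i. \<Sum>l. block_rect_sum i l x)\<bar>\<^sup>2)) \<longlongrightarrow> 0)
    (sequentially \<times>\<^sub>F sequentially)"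
proof -
  have "((\<lambda>p. row_error_bound (fst p) + col_error_bound (snd p)) \<longlongrightarrow> 0 + 0) (sequentially \<times>\<^sub>F sequentially)"
    by (intro tendsto_add filterlim_compose[OF tendsto_row_error_bound filterlim_fst]
        filterlim_compose[OF tendsto_col_error_bound filterlim_snd])
  then have bound: "((\<lambda>(P, Q). row_error_bound P + col_error_bound Q) \<longlongrightarrow> 0) (sequentially \<times>\<^sub>F sequentially)"
    by (simp add: case_prod_beta')
  show ?thesis
  proof (rule tendsto_sandwich[OF _ _ tendsto_const bound])
    show "\<forall>\<^sub>F p in sequentially \<times>\<^sub>F sequentially. 0 \<le> (case p of (P, Q) \<Rightarrow> (1 / (real P * real Q)) *
        (\<Sum>m=1..P. \<Sum>n=1..Q. \<bar>rect_sum {1..m} {1..n} x - (\<Sum>i. \<Sum>l. block_rect_sum i l x)\<bar>\<^sup>2))"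
      by (intro always_eventually) (auto intro!: divide_nonneg_nonneg sum_nonneg)
    show "\<forall>\<^sub>F p in sequentially \<times>\<^sub>F sequentially. (case p of (P, Q) \<Rightarrow> (1 / (real P * real Q)) *
        (\<Sum>m=1..P. \<Sum>n=1..Q. \<bar>rect_sum {1..m} {1..n} x - (\<Sum>i. \<Sum>l. block_rect_sum i l x)\<bar>\<^sup>2))
        \<le> (case p of (P, Q) \<Rightarrow> row_error_bound P + col_error_bound Q)"
      unfolding eventually_prod_sequentially using cesaro_error_le by auto
  qed
qed

end

end

section \<open>Almost everywhere convergence\<close>

context orthonormal_double_series
begin

lemma AE_block_diagonal_limit_eq:
  assumes g_meas: "g \<in> borel_measurable M" and g_L2: "integrable M (\<lambda>x. (g x)\<^sup>2)"
    and L2_sum: "((\<lambda>(m, n). \<integral>x. \<bar>rect_partial_sum c \<psi> m n x - g x\<bar>\<^sup>2 \<partial>M) \<longlongrightarrow> 0)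
                   (sequentially \<times>\<^sub>F sequentially)"
  shows "AE x in M. \<forall>y. ((\<lambda>a. rect_sum {0<..block_end a} {0<..block_end a} x) \<longlongrightarrow> y) sequentially \<longrightarrow> y = g x"
proof (rule AE_pointwise_limit_eq_L2_limit[OF rect_sum_measurable g_meas])
  interpret finite_measure M by (rule finite)
  show "integrable M (\<lambda>x. (rect_sum {0<..block_end a} {0<..block_end a} x - g x)\<^sup>2)" for a
  proof (rule Bochner_Integration.integrable_bound)
    show "integrable M (\<lambda>x. 2 * (rect_sum {0<..block_end a} {0<..block_end a} x)\<^sup>2 + 2 * (g x)\<^sup>2)"
      using g_L2 by (intro Bochner_Integration.integrable_add integrable_mult_right) auto
    show "AE x in M. norm ((rect_sum {0<..block_end a} {0<..block_end a} x - g x)\<^sup>2)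
        \<le> norm (2 * (rect_sum {0<..block_end a} {0<..block_end a} x)\<^sup>2 + 2 * (g x)\<^sup>2)"
      using square_diff_le by (intro AE_I2) simp
  qed (use rect_sum_measurable[of "{0<..block_end a}" "{0<..block_end a}"] g_meas in measurable)
  have partial_sum: "rect_partial_sum c \<psi> m n x = rect_sum {0<..m} {0<..n} x" for m n x
    unfolding rect_partial_sum_def rect_sum_def by (intro sum.cong) auto
  have "filterlim (\<lambda>a. (block_end a, block_end a)) (sequentially \<times>\<^sub>F sequentially) sequentially"
    by (intro filterlim_Pair filterlim_subseq strict_mono_block_end)
  from filterlim_compose[OF L2_sum this]
  show "((\<lambda>a. \<integral>x. (rect_sum {0<..block_end a} {0<..block_end a} x - g x)\<^sup>2 \<partial>M) \<longlongrightarrow> 0) sequentially"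
    by (simp add: partial_sum)
qed auto

theorem AE_strong_cesaro_summable:
  assumes coef: "(\<lambda>(j, k). (c j k)\<^sup>2 * (log 2 (log 2 (real j + 3)))\<^sup>2 * (log 2 (log 2 (real k + 3)))\<^sup>2)
                 summable_on ({1..} \<times> {1..})"
    and g_meas: "g \<in> borel_measurable M" and g_L2: "integrable M (\<lambda>x. (g x)\<^sup>2)"
    and L2_sum: "((\<lambda>(m, n). \<integral>x. \<bar>rect_partial_sum c \<psi> m n x - g x\<bar>\<^sup>2 \<partial>M) \<longlongrightarrow> 0)
                   (sequentially \<times>\<^sub>F sequentially)"
  shows "AE x in M.
           ((\<lambda>(P, Q). (1 / (real P * real Q)) *
               (\<Sum>m=1..P. \<Sum>n=1..Q. \<bar>rect_partial_sum c \<psi> m n x - g x\<bar>\<^sup>2)) \<longlongrightarrow> 0)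
           (sequentially \<times>\<^sub>F sequentially)"
  using AE_block_majorant_summable[OF coef] AE_block_diagonal_limit_eq[OF g_meas g_L2 L2_sum]
proof eventually_elim
  case (elim x)
  then have "((\<lambda>a. rect_sum {0<..block_end a} {0<..block_end a} x) \<longlongrightarrow> (\<Sum>i. \<Sum>l. block_rect_sum i l x)) sequentially"
    by (intro tendsto_rect_sum_block_diagonal) auto
  with elim have "g x = (\<Sum>i. \<Sum>l. block_rect_sum i l x)"
    by auto
  moreover have "rect_partial_sum c \<psi> m n x = rect_sum {1..m} {1..n} x" for m n
    unfolding rect_partial_sum_def rect_sum_def ..
  ultimately show ?case
    using cesaro_error_tendsto_zero elim by simp
qed

end

theorem theorem2:
  fixes M :: "'a measure"
    and \<psi> :: "nat \<Rightarrow> nat \<Rightarrow> 'a \<Rightarrow> real"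
    and c :: "nat \<Rightarrow> nat \<Rightarrow> real"
    and g :: "'a \<Rightarrow> real"
  assumes fin: "finite_measure M"
    and ons: "orthonormal_system2 M \<psi>"
    and coef: "(\<lambda>(j, k). (c j k)\<^sup>2 * (log 2 (log 2 (real j + 3)))\<^sup>2 * (log 2 (log 2 (real k + 3)))\<^sup>2)
                 summable_on ({1..} \<times> {1..})"
    and g_meas: "g \<in> borel_measurable M"
    and g_L2: "integrable M (\<lambda>x. (g x)\<^sup>2)"
    and L2_sum: "((\<lambda>(m, n). \<integral>x. \<bar>rect_partial_sum c \<psi> m n x - g x\<bar>\<^sup>2 \<partial>M) \<longlongrightarrow> 0)
                   (sequentially \<times>\<^sub>F sequentially)"
  shows "AE x in M.
           ((\<lambda>(P, Q). (1 / (real P * real Q)) *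
               (\<Sum>m=1..P. \<Sum>n=1..Q. \<bar>rect_partial_sum c \<psi> m n x - g x\<bar>\<^sup>2)) \<longlongrightarrow> 0)
           (sequentially \<times>\<^sub>F sequentially)"
proof -
  interpret orthonormal_double_series M \<psi> c
    using fin ons by (rule orthonormal_double_series.intro)
  show ?thesis
    using coef g_meas g_L2 L2_sum by (rule AE_strong_cesaro_summable)
qed

end
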